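(* Fix an equation $(f,q,w)$ as in the context; let $\xi$, $\mathbf S_{\alpha,\beta}$ and $\lambda_n(\alpha,\beta)$ be as in the context. Then: (i) if $\alpha_0\in(0,\xi)$, $\beta_0\in(0,\pi)$: for each $0\le n\le N-2$, $\lambda_n(\alpha_0,\beta_0)$ is strictly less than each of $\lambda_n(0,\beta_0)$, $\lambda_n(\alpha_0,\pi)$, each of which is strictly less than $\lambda_{n+1}(\alpha_0,\beta_0)$; and $\lambda_{N-1}(\alpha_0,\beta_0)<\lambda_{N-1}(0,\beta_0)$; (ii) if $\alpha_0\in(\xi,\pi)$, $\beta_0\in(0,\pi)$: $\lambda_0(0,\beta_0)<\lambda_0(\alpha_0,\beta_0)$, and for each $0\le n\le N-2$, $\lambda_n(\alpha_0,\beta_0)$ is strictly less than each of $\lambda_{n+1}(0,\beta_0)$, $\lambda_n(\alpha_0,\pi)$, each of which is strictly less than $\lambda_{n+1}(\alpha_0,\beta_0)$; (iii) if $\alpha_0=\xi$, $\beta_0\in(0,\pi)$: $\lambda_0(0,\beta_0)<\lambda_0(\xi,\beta_0)$, for each $0\le n\le N-3$, $\lambda_n(\xi,\beta_0)$ is strictly less than each of $\lambda_{n+1}(0,\beta_0)$, $\lambda_n(\xi,\pi)$, each of which is strictly less than $\lambda_{n+1}(\xi,\beta_0)$; and $\lambda_{N-2}(\xi,\beta_0)<\lambda_{N-1}(0,\beta_0)$; (iv) if $\alpha_0\in(0,\xi)$: $\lambda_0(\alpha_0,\pi)<\lambda_0(0,\pi)<\lambda_1(\alpha_0,\pi)<\lambda_1(0,\pi)<\cdots<\lambda_{N-2}(\alpha_0,\pi)<\lambda_{N-2}(0,\pi)$;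 (v) if $\alpha_0\in(\xi,\pi)$: $\lambda_0(0,\pi)<\lambda_0(\alpha_0,\pi)<\lambda_1(0,\pi)<\lambda_1(\alpha_0,\pi)<\cdots<\lambda_{N-2}(0,\pi)<\lambda_{N-2}(\alpha_0,\pi)$; (vi) $\lambda_0(0,\pi)<\lambda_0(\xi,\pi)<\lambda_1(0,\pi)<\cdots<\lambda_{N-3}(0,\pi)<\lambda_{N-3}(\xi,\pi)<\lambda_{N-2}(0,\pi)$; (vii) if $\beta_0\in(0,\pi)$: $\lambda_0(0,\beta_0)<\lambda_0(0,\pi)<\lambda_1(0,\beta_0)<\cdots<\lambda_{N-2}(0,\beta_0)<\lambda_{N-2}(0,\pi)<\lambda_{N-1}(0,\beta_0)$.
   Context: Let $N\ge2$ be an integer. An equation is given by real sequences $f=\{f_n\}_{n=0}^N$, $q=\{q_n\}_{n=1}^N$, $w=\{w_n\}_{n=1}^N$ with $f_n\neq0$ ($0\le n\le N$), $w_n>0$ ($1\le n\le N$); it is $-\nabla(f_n\Delta y_n)+q_ny_n=\lambda w_ny_n$, $1\le n\le N$, for $y=\{y_n\}_{n=0}^{N+1}$, $\Delta y_n=y_{n+1}-y_n$, $\nabla y_n=y_n-y_{n-1}$. For $\alpha\in[0,\pi)$, $\beta\in(0,\pi]$, $\mathbf S_{\alpha,\beta}$ is the boundary condition $\cos\alpha\,y_0-\sin\alpha\,f_0\Delta y_0=0$, $\cos\beta\,y_N-\sin\beta\,f_N\Delta y_N=0$. An eigenvalue is $\lambda\in\mathbb C$ for which the equation with this boundary condition has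 a nontrivial solution; all are real, the multiplicity is the dimension of the solution space (equal to the multiplicity as zero of the characteristic polynomial), and counted with multiplicity they are ordered $\lambda_0(\alpha,\beta)\le\lambda_1(\alpha,\beta)\le\cdots$. Put $\xi:=\arctan(-1/f_0)+\pi$ if $f_0>0$, $\xi:=\arctan(-1/f_0)$ if $f_0<0$. The problem with $\mathbf S_{\alpha,\beta}$ has $N$ eigenvalues if $\alpha\ne\xi,\beta\ne\pi$, $N-1$ if exactly one of $\alpha=\xi$, $\beta=\pi$ holds, and $N-2$ if both hold. *)

theory Defs
  imports "HOL-Analysis.Analysis" "HOL-Library.Function_Algebras" "HOL-Library.Multiset"
begin

text \<open>Sequences y = (y_0,...,y_{N+1}) are represented as functions nat => complex
  that vanish for indices > N+1.\<close>

definition sl_eq ::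
  "nat \<Rightarrow> (nat \<Rightarrow> real) \<Rightarrow> (nat \<Rightarrow> real) \<Rightarrow> (nat \<Rightarrow> real) \<Rightarrow> complex \<Rightarrow> (nat \<Rightarrow> complex) \<Rightarrow> bool"
  where "sl_eq N f q w lm y \<longleftrightarrow>
    (\<forall>n\<in>{1..N}.
       - (of_real (f n) * (y (n+1) - y n) - of_real (f (n-1)) * (y n - y (n-1)))
       + of_real (q n) * y n = lm * of_real (w n) * y n)"

definition sl_bc ::
  "nat \<Rightarrow> (nat \<Rightarrow> real) \<Rightarrow> real \<Rightarrow> real \<Rightarrow> (nat \<Rightarrow> complex) \<Rightarrow> bool"
  where "sl_bc N f \<alpha> \<beta> y \<longleftrightarrow>
    of_real (cos \<alpha>) * y 0 - of_real (sin \<alpha>) * of_real (f 0) * (y 1 - y 0) = 0 \<and>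
    of_real (cos \<beta>) * y N - of_real (sin \<beta>) * of_real (f N) * (y (N+1) - y N) = 0"

definition sl_solutions ::
  "nat \<Rightarrow> (nat \<Rightarrow> real) \<Rightarrow> (nat \<Rightarrow> real) \<Rightarrow> (nat \<Rightarrow> real) \<Rightarrow> real \<Rightarrow> real \<Rightarrow> complex \<Rightarrow> (nat \<Rightarrow> complex) set"
  where "sl_solutions N f q w \<alpha> \<beta> lm =
    {y. (\<forall>n>N+1. y n = 0) \<and> sl_eq N f q w lm y \<and> sl_bc N f \<alpha> \<beta> y}"

definition sl_is_eigenvalue ::
  "nat \<Rightarrow> (nat \<Rightarrow> real) \<Rightarrow> (nat \<Rightarrow> real) \<Rightarrow> (nat \<Rightarrow> real) \<Rightarrow> real \<Rightarrow> real \<Rightarrow> complex \<Rightarrow> bool"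
  where "sl_is_eigenvalue N f q w \<alpha> \<beta> lm \<longleftrightarrow> (\<exists>y\<in>sl_solutions N f q w \<alpha> \<beta> lm. y \<noteq> 0)"

definition sl_mult ::
  "nat \<Rightarrow> (nat \<Rightarrow> real) \<Rightarrow> (nat \<Rightarrow> real) \<Rightarrow> (nat \<Rightarrow> real) \<Rightarrow> real \<Rightarrow> real \<Rightarrow> complex \<Rightarrow> nat"
  where "sl_mult N f q w \<alpha> \<beta> lm =
    vector_space.dim (%(c::complex) (y::nat \<Rightarrow> complex). (%n. c * y n)) (sl_solutions N f q w \<alpha> \<beta> lm)"

definition sl_eigs_mset ::
  "nat \<Rightarrow> (nat \<Rightarrow> real) \<Rightarrow> (nat \<Rightarrow> real) \<Rightarrow> (nat \<Rightarrow> real) \<Rightarrow> real \<Rightarrow> real \<Rightarrow> complex multiset"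
  where "sl_eigs_mset N f q w \<alpha> \<beta> =
    (\<Sum>lm\<in>{lm. sl_is_eigenvalue N f q w \<alpha> \<beta> lm}. replicate_mset (sl_mult N f q w \<alpha> \<beta> lm) lm)"

text \<open>lambda_k(alpha,beta): the k-th eigenvalue (k = 0,1,...) in nondecreasing order,
  counted with multiplicity.  All eigenvalues are real, so Re is the identity on them.\<close>
definition sl_eig ::
  "nat \<Rightarrow> (nat \<Rightarrow> real) \<Rightarrow> (nat \<Rightarrow> real) \<Rightarrow> (nat \<Rightarrow> real) \<Rightarrow> real \<Rightarrow> real \<Rightarrow> nat \<Rightarrow> real"
  where "sl_eig N f q w \<alpha> \<beta> k =
    sorted_list_of_multiset (image_mset Re (sl_eigs_mset N f q w \<alpha> \<beta>)) ! k"

definition sl_xi :: "(nat \<Rightarrow> real) \<Rightarrow> real"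
  where "sl_xi f = (if f 0 > 0 then arctan (-1 / f 0) + pi else arctan (-1 / f 0))"

end

theory Submission
  imports Defs "HOL-Computational_Algebra.Fundamental_Theorem_Algebra"
begin

text \<open>For the left boundary data \<open>(y\<^sub>0, f\<^sub>0 \<Delta>y\<^sub>0) = (sin \<alpha>, cos \<alpha>)\<close> the values \<open>y\<^sub>n\<close> and
  \<open>f\<^sub>n \<Delta>y\<^sub>n\<close> of the solution are real polynomials in \<open>\<lambda>\<close>, and the eigenvalues for
  the boundary angles \<open>(\<alpha>, \<beta>)\<close> are the roots of the characteristic polynomial
  \<open>cos \<beta> y\<^sub>N - sin \<beta> f\<^sub>N \<Delta>y\<^sub>N\<close>. By the discrete Lagrange identity, the Wronskian in \<open>\<lambda>\<close>
  of two characteristic polynomials that differ only in \<open>\<alpha>\<close> (or only in \<open>\<beta>\<close>) is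
  \<open>sin (\<alpha> - \<alpha>')\<close> (resp. \<open>sin (\<beta>' - \<beta>)\<close>) times a positive weighted sum of squares.
  Hence all eigenvalues are real and simple, and the eigenvalues of two such problems strictly
  interlace. Their number is the degree of the characteristic polynomial, which drops by one
  when \<open>\<beta> = \<pi>\<close> and when \<open>\<alpha> = \<xi>\<close>. Which of two interlacing families starts first is
  decided by writing the characteristic polynomial for \<open>\<alpha> = \<xi>\<close> as a combination of the
  two with coefficients of known signs.\<close>

section \<open>Strictly interlacing finite sets\<close>

abbreviation sorted_nth :: "'a::linorder set \<Rightarrow> nat \<Rightarrow> 'a" where
  "sorted_nth A i \<equiv> sorted_list_of_set A ! i"

lemma sorted_nth_mem: "finite A \<Longrightarrow> i < card A \<Longrightarrow> sorted_nth A i \<in> A"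
  by (metis length_sorted_list_of_set nth_mem set_sorted_list_of_set)

lemma sorted_nth_strict_mono: "finite A \<Longrightarrow> i < j \<Longrightarrow> j < card A \<Longrightarrow> sorted_nth A i < sorted_nth A j"
  by (metis length_sorted_list_of_set sorted_wrt_nth_less strict_sorted_list_of_set)

lemma sorted_nth_mono: "finite A \<Longrightarrow> i \<le> j \<Longrightarrow> j < card A \<Longrightarrow> sorted_nth A i \<le> sorted_nth A j"
  by (metis order.order_iff_strict sorted_nth_strict_mono)

lemma sorted_nth_surj: "finite A \<Longrightarrow> x \<in> A \<Longrightarrow> \<exists>i<card A. sorted_nth A i = x"
  by (metis in_set_conv_nth length_sorted_list_of_set set_sorted_list_of_set)

lemma sorted_nth_0_le: "finite A \<Longrightarrow> x \<in> A \<Longrightarrow> sorted_nth A 0 \<le> x"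
  by (metis sorted_nth_surj sorted_nth_mono le0)

lemma card_less_sorted_nth:
  assumes "finite A" "k < card A"
  shows "card {x\<in>A. x < sorted_nth A k} = k"
proof -
  have "{x\<in>A. x < sorted_nth A k} = sorted_nth A ` {..<k}"
  proof (intro equalityI subsetI)
    fix x assume "x \<in> {x\<in>A. x < sorted_nth A k}"
    then obtain i where i: "i < card A" "sorted_nth A i = x" "x < sorted_nth A k"
      using sorted_nth_surj[OF assms(1)] by blast
    then have "i < k" using sorted_nth_mono[OF assms(1), of k i] by (meson not_le_imp_less leD)
    with i show "x \<in> sorted_nth A ` {..<k}" by blast
  next
    fix x assume "x \<in> sorted_nth A ` {..<k}"
    then obtain i where "i < k" "x = sorted_nth A i" by blast
    then show "x \<in> {x\<in>A. x < sorted_nth A k}"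
      using sorted_nth_mem[OF assms(1)] sorted_nth_strict_mono[OF assms(1)] assms(2) by auto
  qed
  moreover have "inj_on (sorted_nth A) {..<k}"
    by (rule strict_mono_on_imp_inj_on)
      (use sorted_nth_strict_mono[OF assms(1)] assms(2) in \<open>auto simp: strict_mono_on_def\<close>)
  ultimately show ?thesis by (simp add: card_image)
qed

lemma sorted_nth_less_if_card_less:
  assumes "finite A" "k < card A" "k < card {x\<in>A. x < t}"
  shows "sorted_nth A k < t"
proof (rule ccontr)
  assume "\<not> ?thesis"
  then have "{x\<in>A. x < t} \<subseteq> {x\<in>A. x < sorted_nth A k}" by auto
  then have "card {x\<in>A. x < t} \<le> card {x\<in>A. x < sorted_nth A k}"
    using assms(1) by (intro card_mono) auto
  with card_less_sorted_nth[OF assms(1,2)] assms(3) show False by simp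
qed

definition separates :: "'a::linorder set \<Rightarrow> 'a set \<Rightarrow> bool" where
  "separates B A \<longleftrightarrow> (\<forall>x\<in>A. \<forall>y\<in>A. x < y \<longrightarrow> (\<exists>z\<in>B. x < z \<and> z < y))"

definition strictly_interlace :: "'a::linorder set \<Rightarrow> 'a set \<Rightarrow> bool" where
  "strictly_interlace A B \<longleftrightarrow>
     finite A \<and> finite B \<and> A \<inter> B = {} \<and> separates B A \<and> separates A B"

lemma card_separating_between:
  assumes "finite A" "finite B" "separates B A" "i < card A"
  shows "i \<le> card {y\<in>B. sorted_nth A 0 < y \<and> y < sorted_nth A i}"
proof -
  have "\<forall>j\<in>{..<i}. \<exists>z\<in>B. sorted_nth A j < z \<and> z < sorted_nth A (Suc j)"
  proof
    fix j assume "j \<in> {..<i}"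
    then have j: "Suc j < card A" using assms by auto
    then show "\<exists>z\<in>B. sorted_nth A j < z \<and> z < sorted_nth A (Suc j)"
      using assms(3) sorted_nth_mem[OF assms(1)] sorted_nth_strict_mono[OF assms(1)]
      unfolding separates_def by (meson Suc_lessD lessI)
  qed
  then obtain z where z: "\<forall>j\<in>{..<i}. z j \<in> B \<and> sorted_nth A j < z j \<and> z j < sorted_nth A (Suc j)"
    by metis
  have "strict_mono_on {..<i} z"
  proof (rule strict_mono_onI)
    fix j j' assume "j \<in> {..<i}" "j' \<in> {..<i}" "j < j'"
    then have "sorted_nth A (Suc j) \<le> sorted_nth A j'" using sorted_nth_mono[OF assms(1)] assms(4) by simp
    moreover have "z j < sorted_nth A (Suc j)" "sorted_nth A j' < z j'"
      using z \<open>j \<in> {..<i}\<close> \<open>j' \<in> {..<i}\<close> by auto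
    ultimately show "z j < z j'" by order
  qed
  then have "i = card (z ` {..<i})" by (simp add: card_image strict_mono_on_imp_inj_on)
  also have "\<dots> \<le> card {y\<in>B. sorted_nth A 0 < y \<and> y < sorted_nth A i}"
  proof (intro card_mono subsetI)
    fix y assume "y \<in> z ` {..<i}"
    then obtain j where j: "j < i" "y = z j" by blast
    have "sorted_nth A 0 \<le> sorted_nth A j" "sorted_nth A (Suc j) \<le> sorted_nth A i"
      using sorted_nth_mono[OF assms(1)] j assms(4) by auto
    moreover have "z j \<in> B" "sorted_nth A j < z j" "z j < sorted_nth A (Suc j)" using z j by auto
    ultimately show "y \<in> {y\<in>B. sorted_nth A 0 < y \<and> y < sorted_nth A i}" using j by auto
  qed (use assms(2) in simp)
  finally show ?thesis .
qed

lemma strictly_interlace_alternate: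
  assumes I: "strictly_interlace A B" and first: "sorted_nth A 0 < sorted_nth B 0"
  shows "i < card A \<Longrightarrow> i < card B \<Longrightarrow> sorted_nth A i < sorted_nth B i"
    and "i < card B \<Longrightarrow> i + 1 < card A \<Longrightarrow> sorted_nth B i < sorted_nth A (i+1)"
proof -
  from I have fA: "finite A" and fB: "finite B" and sBA: "separates B A" and sAB: "separates A B"
    by (auto simp: strictly_interlace_def)
  assume i: "i < card A" "i < card B"
  let ?S = "{x\<in>A. sorted_nth B 0 < x \<and> x < sorted_nth B i}"
  have "insert (sorted_nth A 0) ?S \<subseteq> {x\<in>A. x < sorted_nth B i}"
    using first sorted_nth_mem[OF fA] sorted_nth_mono[OF fB, of 0 i] i by auto
  then have "card (insert (sorted_nth A 0) ?S) \<le> card {x\<in>A. x < sorted_nth B i}"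
    using fA by (intro card_mono) auto
  moreover have "card (insert (sorted_nth A 0) ?S) = Suc (card ?S)"
    using fA first by (subst card_insert_disjoint) auto
  moreover have "i \<le> card ?S" by (rule card_separating_between[OF fB fA sAB i(2)])
  ultimately show "sorted_nth A i < sorted_nth B i"
    by (intro sorted_nth_less_if_card_less[OF fA i(1)]) linarith
next
  from I have fA: "finite A" and fB: "finite B" and sBA: "separates B A"
    by (auto simp: strictly_interlace_def)
  assume i: "i < card B" "i + 1 < card A"
  have "i + 1 \<le> card {y\<in>B. sorted_nth A 0 < y \<and> y < sorted_nth A (i+1)}"
    by (rule card_separating_between[OF fA fB sBA i(2)])
  also have "\<dots> \<le> card {y\<in>B. y < sorted_nth A (i+1)}" using fB by (intro card_mono) auto
  finally show "sorted_nth B i < sorted_nth A (i+1)"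
    by (intro sorted_nth_less_if_card_less[OF fB i(1)]) simp
qed

lemma strictly_interlace_larger_starts_first:
  assumes I: "strictly_interlace A B" and c: "card A = card B + 1" and x: "x \<in> B"
  shows "sorted_nth A 0 < x"
proof -
  from I have fA: "finite A" and fB: "finite B" and sBA: "separates B A" and dj: "A \<inter> B = {}"
    by (auto simp: strictly_interlace_def)
  have "sorted_nth B 0 \<le> x" using sorted_nth_0_le[OF fB x] .
  moreover have "sorted_nth A 0 < sorted_nth B 0"
  proof (rule ccontr)
    assume "\<not> ?thesis"
    moreover have "card B > 0" using fB x card_gt_0_iff by blast
    then have "sorted_nth A 0 \<noteq> sorted_nth B 0"
      using sorted_nth_mem[OF fA, of 0] sorted_nth_mem[OF fB, of 0] dj c by auto
    ultimately have lt: "sorted_nth B 0 < sorted_nth A 0" by simp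
    let ?S = "{y\<in>B. sorted_nth A 0 < y \<and> y < sorted_nth A (card B)}"
    have "card B \<le> card ?S" by (rule card_separating_between[OF fA fB sBA]) (use c in simp)
    moreover have "card (insert (sorted_nth B 0) ?S) \<le> card B"
      using sorted_nth_mem[OF fB, of 0] \<open>card B > 0\<close> fB by (intro card_mono) auto
    moreover have "card (insert (sorted_nth B 0) ?S) = Suc (card ?S)"
      using fB lt by (subst card_insert_disjoint) auto
    ultimately show False by linarith
  qed
  ultimately show ?thesis by simp
qed

lemma strictly_interlace_one_more:
  assumes "strictly_interlace A B" "card A = card B + 1" "i < card B"
  shows "sorted_nth A i < sorted_nth B i \<and> sorted_nth B i < sorted_nth A (i+1)"
proof -
  have "finite B" using assms(1) by (simp add: strictly_interlace_def)
  then have "sorted_nth B 0 \<in> B" using sorted_nth_mem assms(3) by fastforce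
  then have "sorted_nth A 0 < sorted_nth B 0"
    using strictly_interlace_larger_starts_first assms(1,2) by blast
  with strictly_interlace_alternate[OF assms(1)] assms(2,3) show ?thesis by simp
qed
section \<open>Real polynomials with a sign-definite Wronskian\<close>

definition poly_wronskian :: "'a::idom poly \<Rightarrow> 'a poly \<Rightarrow> 'a poly" where
  "poly_wronskian P Q = P * pderiv Q - pderiv P * Q"

lemma poly_wronskian_lincomb:
  "poly_wronskian (smult a C + smult b S) (smult a' C + smult b' S) =
     smult (a * b' - b * a') (poly_wronskian C S)"
  unfolding poly_wronskian_def
  by (simp add: pderiv_add pderiv_smult algebra_simps smult_add_right smult_diff_right
      smult_add_left smult_diff_left)

lemma poly_wronskian_transfer_step:
  fixes y u c g :: "'a::idom poly"
  assumes "pderiv c = 0"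
  shows "poly_wronskian (y + c * u) (u + g * (y + c * u)) =
    poly_wronskian y u + pderiv g * (y + c * u)\<^sup>2"
  using assms by (simp add: poly_wronskian_def pderiv_add pderiv_mult algebra_simps power2_eq_square)

lemma poly_sign_after_simple_root:
  fixes P :: "real poly"
  assumes "poly P x = 0" "poly (pderiv P) x \<noteq> 0" "x < z"
    and "\<forall>t. x < t \<and> t \<le> z \<longrightarrow> poly P t \<noteq> 0"
  shows "poly P z * poly (pderiv P) x > 0"
proof -
  have pos: "poly R z > 0"
    if R: "poly R x = 0" "poly (pderiv R) x > 0" "\<forall>t. x < t \<and> t \<le> z \<longrightarrow> poly R t \<noteq> 0"
    for R :: "real poly"
  proof (rule ccontr)
    assume "\<not> ?thesis"
    with R(3) \<open>x < z\<close> have neg: "poly R z < 0" by force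
    obtain d where d: "d > 0" "\<forall>h>0. h < d \<longrightarrow> poly R x < poly R (x + h)"
      using DERIV_pos_inc_right[OF poly_DERIV[of R x] R(2)] by blast
    define h where "h = min (d/2) (z - x)"
    have h: "h > 0" "h < d" "h \<le> z - x" using d \<open>x < z\<close> by (auto simp: h_def)
    then have "poly R (x + h) > 0" using d R(1) by auto
    with neg h have "x + h < z" by (cases "x + h = z") auto
    from poly_IVT[OF this, of R] \<open>poly R (x + h) > 0\<close> neg
    obtain t where "x + h < t" "t < z" "poly R t = 0" by (auto simp: mult_pos_neg)
    with h R(3) show False by auto
  qed
  show ?thesis
  proof (cases "poly (pderiv P) x > 0")
    case True
    with pos[of P] assms show ?thesis by simp
  next
    case False
    with assms(2) have "poly (pderiv (- P)) x > 0" by (simp add: pderiv_minus)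
    with pos[of "- P"] assms have "poly P z < 0" by auto
    with False assms(2) show ?thesis by (simp add: mult_neg_neg)
  qed
qed

text \<open>The quotient \<open>P / Q\<close> is strictly monotone wherever \<open>Q\<close> does not vanish, so it cannot
  vanish twice without a root of \<open>Q\<close> in between.\<close>

lemma wronskian_definite_root_between:
  fixes P Q :: "real poly"
  assumes W: "\<forall>t. s * poly (poly_wronskian P Q) t > 0"
    and xy: "x < y" "poly P x = 0" "poly P y = 0"
  shows "\<exists>t. x < t \<and> t < y \<and> poly Q t = 0"
proof (rule ccontr)
  assume nz: "\<not> ?thesis"
  have "poly Q x \<noteq> 0" "poly Q y \<noteq> 0"
    using W[rule_format, of x] W[rule_format, of y] xy by (auto simp: poly_wronskian_def)
  with nz have Q: "poly Q t \<noteq> 0" if "x \<le> t" "t \<le> y" for t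
    using that by (cases "t = x"; cases "t = y") auto
  define h where "h t = s * (poly P t / poly Q t)" for t
  have "h y < h x"
  proof (rule DERIV_neg_imp_decreasing[OF xy(1)])
    fix t assume "x \<le> t" "t \<le> y"
    with Q have q: "poly Q t \<noteq> 0" by blast
    let ?D = "s * ((poly (pderiv P) t * poly Q t - poly P t * poly (pderiv Q) t) / (poly Q t * poly Q t))"
    have "DERIV h t :> ?D"
      unfolding h_def by (intro DERIV_cmult DERIV_divide poly_DERIV q)
    moreover have "s * (poly (pderiv P) t * poly Q t - poly P t * poly (pderiv Q) t) < 0"
      using W[rule_format, of t] by (simp add: poly_wronskian_def algebra_simps)
    moreover have "poly Q t * poly Q t > 0" using q by (simp flip: power2_eq_square)
    ultimately have "?D < 0" by (simp add: divide_neg_pos)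
    with \<open>DERIV h t :> ?D\<close> show "\<exists>D. DERIV h t :> D \<and> D < 0" by blast
  qed
  then show False using xy by (simp add: h_def)
qed

lemma wronskian_definite_roots_interlace:
  fixes P Q :: "real poly"
  assumes "P \<noteq> 0" "Q \<noteq> 0"
    and W: "\<forall>t. s * poly (poly_wronskian P Q) t > 0"
  shows "strictly_interlace {x. poly P x = 0} {x. poly Q x = 0}"
  unfolding strictly_interlace_def separates_def
proof (intro conjI ballI impI)
  show "finite {x. poly P x = 0}" "finite {x. poly Q x = 0}"
    using assms(1,2) poly_roots_finite by blast+
  show "{x. poly P x = 0} \<inter> {x. poly Q x = 0} = {}"
  proof (rule ccontr)
    assume "\<not> ?thesis"
    then obtain x where "poly P x = 0" "poly Q x = 0" by auto
    with W[rule_format, of x] show False by (simp add: poly_wronskian_def)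
  qed
next
  fix x y assume "x \<in> {x. poly P x = 0}" "y \<in> {x. poly P x = 0}" "x < y"
  with wronskian_definite_root_between[OF W, of x y]
  show "\<exists>z\<in>{x. poly Q x = 0}. x < z \<and> z < y" by auto
next
  have "\<forall>t. (- s) * poly (poly_wronskian Q P) t > 0"
    using W by (simp add: poly_wronskian_def algebra_simps)
  moreover fix x y assume "x \<in> {x. poly Q x = 0}" "y \<in> {x. poly Q x = 0}" "x < y"
  ultimately show "\<exists>z\<in>{x. poly P x = 0}. x < z \<and> z < y"
    using wronskian_definite_root_between[of "- s" Q P x y] by auto
qed

lemma wronskian_definite_combination_root:
  fixes P Q :: "real poly"
  assumes W: "\<forall>t. s * poly (poly_wronskian P Q) t > 0"
    and xz: "x < z" "poly P x = 0" "poly Q z = 0"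
    and nP: "\<forall>t. x < t \<and> t \<le> z \<longrightarrow> poly P t \<noteq> 0"
    and ab: "s * a * b > 0"
  shows "\<exists>t. x < t \<and> t < z \<and> a * poly P t + b * poly Q t = 0"
proof -
  have w: "s * (poly (pderiv P) x * poly Q x) < 0"
    using W[rule_format, of x] xz by (simp add: poly_wronskian_def)
  then have d: "poly (pderiv P) x \<noteq> 0" by auto
  have sa: "poly P z * poly (pderiv P) x > 0"
    by (rule poly_sign_after_simple_root[OF xz(2) d xz(1) nP])
  have "(s * (poly Q x * poly P z)) * (poly (pderiv P) x * poly (pderiv P) x)
      = (s * (poly (pderiv P) x * poly Q x)) * (poly P z * poly (pderiv P) x)"
    by (simp add: algebra_simps)
  also have "\<dots> < 0" using w sa by (rule mult_neg_pos)
  finally have "s * (poly Q x * poly P z) < 0"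
    using d by (simp add: mult_less_0_iff)
  then have "(s * a * b) * (s * (poly Q x * poly P z)) < 0" using ab mult_pos_neg by blast
  then have "(s * s) * (a * b * (poly Q x * poly P z)) < 0" by (simp add: algebra_simps)
  then have "a * b * (poly Q x * poly P z) < 0" by (simp add: mult_less_0_iff)
  then have "poly (smult a P + smult b Q) x * poly (smult a P + smult b Q) z < 0"
    using xz by (simp add: algebra_simps)
  from poly_IVT[OF xz(1) this] show ?thesis by auto
qed

text \<open>Otherwise the last root \<open>x\<close> of \<open>P\<close> below the first root \<open>z\<close> of \<open>Q\<close> would yield a root
  of the combination in \<open>(x, z)\<close>.\<close>

lemma wronskian_definite_first_root_less:
  fixes P Q :: "real poly"
  assumes I: "strictly_interlace {x. poly P x = 0} {x. poly Q x = 0}"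
    and W: "\<forall>t. s * poly (poly_wronskian P Q) t > 0"
    and ab: "s * a * b > 0"
    and rP: "\<exists>x. poly P x = 0" and rQ: "\<exists>x. poly Q x = 0"
    and R: "\<forall>t. a * poly P t + b * poly Q t = 0 \<longrightarrow> sorted_nth {x. poly Q x = 0} 0 < t"
  shows "sorted_nth {x. poly Q x = 0} 0 < sorted_nth {x. poly P x = 0} 0"
proof (rule ccontr)
  let ?A = "{x. poly P x = 0}" and ?B = "{x. poly Q x = 0}"
  from I have fA: "finite ?A" and fB: "finite ?B" and dj: "?A \<inter> ?B = {}"
    by (auto simp: strictly_interlace_def)
  define z where "z = sorted_nth ?B 0"
  have zB: "z \<in> ?B" unfolding z_def using sorted_nth_mem[OF fB] rQ fB card_gt_0_iff by blast
  have a0: "sorted_nth ?A 0 \<in> ?A" using sorted_nth_mem[OF fA] rP fA card_gt_0_iff by blast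
  assume "\<not> sorted_nth ?B 0 < sorted_nth ?A 0"
  with zB a0 dj have lt: "sorted_nth ?A 0 < z" unfolding z_def by (cases "z = sorted_nth ?A 0") auto
  define S where "S = {y\<in>?A. y < z}"
  have S: "S \<noteq> {}" "finite S" using lt a0 fA by (auto simp: S_def)
  define x where "x = Max S"
  have "x \<in> S" unfolding x_def using S by simp
  then have xz: "x < z" "poly P x = 0" by (auto simp: S_def)
  have nP: "\<forall>t. x < t \<and> t \<le> z \<longrightarrow> poly P t \<noteq> 0"
  proof (intro allI impI notI)
    fix t assume t: "x < t \<and> t \<le> z" "poly P t = 0"
    with zB dj have "t \<in> S" by (cases "t = z") (auto simp: S_def)
    then have "t \<le> x" unfolding x_def using S by simp
    with t show False by simp
  qed
  from wronskian_definite_combination_root[OF W xz(1,2) _ nP ab] zB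
  obtain t where "x < t" "t < z" "a * poly P t + b * poly Q t = 0" by auto
  with R show False unfolding z_def by force
qed

section \<open>Transfer polynomials of the difference equation\<close>

lemma sin_cos_not_both_zero: "sin (x::real) \<noteq> 0 \<or> cos x \<noteq> 0"
  using sin_cos_squared_add[of x] by (auto simp del: sin_cos_squared_add)

locale sl_equation =
  fixes N :: nat and f q w :: "nat \<Rightarrow> real"
  assumes N2: "N \<ge> 2" and f_nz: "\<And>n. n \<le> N \<Longrightarrow> f n \<noteq> 0"
    and w_pos: "\<And>n. 1 \<le> n \<Longrightarrow> n \<le> N \<Longrightarrow> w n > 0"
begin

text \<open>\<open>sol_y a b n\<close> and \<open>sol_u a b n\<close> are \<open>y\<^sub>n\<close> and the quasi-difference \<open>f\<^sub>n \<Delta>y\<^sub>n\<close>, as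
  polynomials in \<open>\<lambda>\<close>, of the solution with \<open>y\<^sub>0 = a\<close> and \<open>f\<^sub>0 \<Delta>y\<^sub>0 = b\<close>.\<close>

fun sol_pair :: "real poly \<Rightarrow> real poly \<Rightarrow> nat \<Rightarrow> real poly \<times> real poly" where
  "sol_pair a b 0 = (a, b)"
| "sol_pair a b (Suc n) =
    (let (y, u) = sol_pair a b n; y' = y + [:1 / f n:] * u
     in (y', u + [:q (Suc n), - w (Suc n):] * y'))"

definition sol_y :: "real poly \<Rightarrow> real poly \<Rightarrow> nat \<Rightarrow> real poly" where
  "sol_y a b n = fst (sol_pair a b n)"

definition sol_u :: "real poly \<Rightarrow> real poly \<Rightarrow> nat \<Rightarrow> real poly" where
  "sol_u a b n = snd (sol_pair a b n)"

lemma sol_y_0 [simp]: "sol_y a b 0 = a" and sol_u_0 [simp]: "sol_u a b 0 = b"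
  by (simp_all add: sol_y_def sol_u_def)

lemma sol_y_Suc: "sol_y a b (Suc n) = sol_y a b n + [:1 / f n:] * sol_u a b n"
  by (simp add: sol_y_def sol_u_def split_beta Let_def)

lemma sol_u_Suc:
  "sol_u a b (Suc n) = sol_u a b n + [:q (Suc n), - w (Suc n):] * sol_y a b (Suc n)"
  by (simp add: sol_y_def sol_u_def split_beta Let_def)

definition sol_energy :: "real poly \<Rightarrow> real poly \<Rightarrow> nat \<Rightarrow> real poly" where
  "sol_energy a b n = (\<Sum>k\<in>{1..n}. smult (w k) ((sol_y a b k)\<^sup>2))"

lemma poly_wronskian_sol:
  "poly_wronskian (sol_y a b n) (sol_u a b n) = poly_wronskian a b - sol_energy a b n"
proof (induction n)
  case (Suc n)
  let ?g = "[:q (Suc n), - w (Suc n):]"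
  have "poly_wronskian (sol_y a b (Suc n)) (sol_u a b (Suc n)) =
      poly_wronskian (sol_y a b n) (sol_u a b n) + pderiv ?g * (sol_y a b (Suc n))\<^sup>2"
    unfolding sol_u_Suc sol_y_Suc by (rule poly_wronskian_transfer_step) simp
  with Suc show ?case by (simp add: sol_energy_def pderiv_pCons)
qed (simp add: sol_energy_def)

lemma sol_casorati_const:
  "sol_y a b n * sol_u c d n - sol_y c d n * sol_u a b n = a * d - c * b"
proof (induction n)
  case (Suc n)
  have "(y1 + r * u1) * (u2 + g * (y2 + r * u2)) - (y2 + r * u2) * (u1 + g * (y1 + r * u1))
      = y1 * u2 - y2 * u1" for y1 u1 y2 u2 r g :: "real poly"
    by (simp add: algebra_simps)
  from this[of "sol_y a b n" "[:1 / f n:]" "sol_u a b n" "sol_u c d n"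
      "[:q (Suc n), - w (Suc n):]" "sol_y c d n"] Suc
  show ?case by (simp add: sol_u_Suc sol_y_Suc)
qed simp

lemma sol_linear:
  "sol_y (p * a + r * a') (p * b + r * b') n = p * sol_y a b n + r * sol_y a' b' n \<and>
   sol_u (p * a + r * a') (p * b + r * b') n = p * sol_u a b n + r * sol_u a' b' n"
  by (induction n) (simp_all add: sol_y_Suc sol_u_Suc algebra_simps)

lemma sol_basis:
  "sol_y a b n = a * sol_y 1 0 n + b * sol_y 0 1 n \<and> sol_u a b n = a * sol_u 1 0 n + b * sol_u 0 1 n"
  using sol_linear[of a 1 b 0 0 1 n] by simp

definition bc_poly :: "real poly \<Rightarrow> real poly \<Rightarrow> real \<Rightarrow> real poly" where
  "bc_poly a b \<beta> = smult (cos \<beta>) (sol_y a b N) - smult (sin \<beta>) (sol_u a b N)"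

definition char_poly :: "real \<Rightarrow> real \<Rightarrow> real poly" where
  "char_poly \<alpha> \<beta> = bc_poly [:sin \<alpha>:] [:cos \<alpha>:] \<beta>"

lemma char_poly_sin_cos:
  "char_poly \<alpha> \<beta> = smult (sin \<alpha>) (bc_poly 1 0 \<beta>) + smult (cos \<alpha>) (bc_poly 0 1 \<beta>)"
  using sol_basis[of "[:sin \<alpha>:]" "[:cos \<alpha>:]" N]
  by (simp add: char_poly_def bc_poly_def smult_add_right smult_diff_right algebra_simps)

text \<open>By the Casorati identity this solution ends at constants, i.e.\ it satisfies the right
  boundary condition for every \<open>\<lambda>\<close>.\<close>

lemma sol_right_bc_end:
  "sol_y (bc_poly 0 1 \<beta>) (- bc_poly 1 0 \<beta>) N = [:- sin \<beta>:] \<and>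
   sol_u (bc_poly 0 1 \<beta>) (- bc_poly 1 0 \<beta>) N = [:- cos \<beta>:]"
proof -
  let ?D = "sol_y 1 0 N * sol_u 0 1 N - sol_y 0 1 N * sol_u 1 0 N"
  have det: "?D = 1" using sol_casorati_const[of 1 0 N 0 1] by simp
  let ?\<psi> = "\<lambda>s. s (bc_poly 0 1 \<beta>) (- bc_poly 1 0 \<beta>) N"
  have "?\<psi> sol_y = bc_poly 0 1 \<beta> * sol_y 1 0 N - bc_poly 1 0 \<beta> * sol_y 0 1 N"
       "?\<psi> sol_u = bc_poly 0 1 \<beta> * sol_u 1 0 N - bc_poly 1 0 \<beta> * sol_u 0 1 N"
    using sol_basis[of "bc_poly 0 1 \<beta>" "- bc_poly 1 0 \<beta>" N] by simp_all
  moreover have "bc_poly 0 1 \<beta> * sol_y 1 0 N - bc_poly 1 0 \<beta> * sol_y 0 1 N = smult (- sin \<beta>) ?D"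
      "bc_poly 0 1 \<beta> * sol_u 1 0 N - bc_poly 1 0 \<beta> * sol_u 0 1 N = smult (- cos \<beta>) ?D"
    by (simp_all add: bc_poly_def algebra_simps smult_diff_right)
  ultimately show ?thesis using det by simp
qed

lemma poly_wronskian_char_poly_alpha:
  "poly_wronskian (char_poly \<alpha> \<beta>) (char_poly \<alpha>' \<beta>) =
     smult (sin (\<alpha> - \<alpha>')) (sol_energy (bc_poly 0 1 \<beta>) (- bc_poly 1 0 \<beta>) N)"
proof -
  let ?C = "bc_poly 1 0 \<beta>" and ?S = "bc_poly 0 1 \<beta>"
  have "poly_wronskian ?S (- ?C) - sol_energy ?S (- ?C) N = 0"
    using poly_wronskian_sol[of ?S "- ?C" N] sol_right_bc_end[of \<beta>]
    by (simp add: poly_wronskian_def pderiv_pCons)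
  then have "poly_wronskian ?C ?S = sol_energy ?S (- ?C) N"
    by (simp add: poly_wronskian_def pderiv_minus algebra_simps)
  then show ?thesis
    unfolding char_poly_sin_cos poly_wronskian_lincomb by (simp add: sin_diff)
qed

lemma poly_wronskian_char_poly_beta:
  "poly_wronskian (char_poly \<alpha> \<beta>) (char_poly \<alpha> \<beta>') =
     smult (sin (\<beta>' - \<beta>)) (sol_energy [:sin \<alpha>:] [:cos \<alpha>:] N)"
proof -
  let ?y = "sol_y [:sin \<alpha>:] [:cos \<alpha>:] N" and ?u = "sol_u [:sin \<alpha>:] [:cos \<alpha>:] N"
  have cp: "char_poly \<alpha> b = smult (cos b) ?y + smult (- sin b) ?u" for b
    by (simp add: char_poly_def bc_poly_def)
  have "poly_wronskian ?y ?u = - sol_energy [:sin \<alpha>:] [:cos \<alpha>:] N"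
    using poly_wronskian_sol[of "[:sin \<alpha>:]" "[:cos \<alpha>:]" N] by (simp add: poly_wronskian_def)
  moreover have "cos \<beta> * - sin \<beta>' - - sin \<beta> * cos \<beta>' = - sin (\<beta>' - \<beta>)"
    by (simp add: sin_diff)
  ultimately show ?thesis
    unfolding cp poly_wronskian_lincomb by simp
qed

text \<open>A solution vanishing at two consecutive interior nodes vanishes identically.\<close>

lemma sol_energy_pos:
  assumes "poly a x \<noteq> 0 \<or> poly b x \<noteq> 0 \<or> poly (sol_y a b N) x \<noteq> 0 \<or> poly (sol_u a b N) x \<noteq> 0"
  shows "poly (sol_energy a b N) x > 0"
proof -
  have nonneg: "0 \<le> w k * (poly (sol_y a b k) x)\<^sup>2" if "k \<in> {1..N}" for k
    using that by (simp add: w_pos less_imp_le)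
  have "poly (sol_y a b 1) x \<noteq> 0 \<or> poly (sol_y a b 2) x \<noteq> 0"
  proof (rule ccontr)
    assume "\<not> ?thesis"
    then have y12: "poly (sol_y a b 1) x = 0" "poly (sol_y a b 2) x = 0" by auto
    have "f 1 \<noteq> 0" using f_nz N2 by simp
    then have u1: "poly (sol_u a b 1) x = 0"
      using y12 sol_y_Suc[of a b 1] by (simp add: numeral_2_eq_2)
    have "poly (sol_y a b n) x = 0 \<and> poly (sol_u a b n) x = 0" if "n \<ge> 1" for n
      using that
    proof (induction n)
      case (Suc n)
      then show ?case using y12 u1 by (cases "n = 0") (auto simp: sol_y_Suc sol_u_Suc)
    qed simp
    moreover have "poly b x = 0" using u1 y12 sol_u_Suc[of a b 0] by simp
    moreover have "poly a x = 0" using y12 sol_y_Suc[of a b 0] \<open>poly b x = 0\<close> by simp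
    ultimately show False using assms N2 by simp
  qed
  then obtain k where "k \<in> {1, 2}" "poly (sol_y a b k) x \<noteq> 0" by blast
  with N2 have k: "k \<in> {1..N}" "poly (sol_y a b k) x \<noteq> 0" by auto
  then have "0 < w k * (poly (sol_y a b k) x)\<^sup>2" using w_pos by simp
  then show ?thesis
    unfolding sol_energy_def poly_sum using sum_pos2[of "{1..N}", OF _ k(1) _ nonneg] by simp
qed

lemma sol_energy_char_pos: "poly (sol_energy [:sin \<alpha>:] [:cos \<alpha>:] N) x > 0"
proof -
  have "poly [:sin \<alpha>:] x \<noteq> 0 \<or> poly [:cos \<alpha>:] x \<noteq> 0"
    using sin_cos_not_both_zero[of \<alpha>] by simp
  then show ?thesis by (intro sol_energy_pos) blast
qed

lemma sol_energy_right_bc_pos: "poly (sol_energy (bc_poly 0 1 \<beta>) (- bc_poly 1 0 \<beta>) N) x > 0"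
proof -
  let ?\<psi> = "\<lambda>s. s (bc_poly 0 1 \<beta>) (- bc_poly 1 0 \<beta>) N"
  have "poly (?\<psi> sol_y) x \<noteq> 0 \<or> poly (?\<psi> sol_u) x \<noteq> 0"
    using sin_cos_not_both_zero[of \<beta>] sol_right_bc_end[of \<beta>] by simp
  then show ?thesis by (intro sol_energy_pos) blast
qed

end

section \<open>Eigenvalues as roots of the characteristic polynomial\<close>

abbreviation cpoly :: "real poly \<Rightarrow> complex poly" where
  "cpoly p \<equiv> map_poly complex_of_real p"

lemma cpoly_add: "cpoly (p + r) = cpoly p + cpoly r"
  and cpoly_diff: "cpoly (p - r) = cpoly p - cpoly r"
  and cpoly_minus: "cpoly (- p) = - cpoly p"
  and cpoly_smult: "cpoly (smult c p) = smult (of_real c) (cpoly p)"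
  and cpoly_pderiv: "cpoly (pderiv p) = pderiv (cpoly p)"
  by (intro poly_eqI; simp add: coeff_map_poly coeff_pderiv)+

lemma cpoly_mult: "cpoly (p * r) = cpoly p * cpoly r"
  by (intro poly_eqI) (simp add: coeff_map_poly coeff_mult)

lemma poly_cpoly_of_real: "poly (cpoly p) (of_real x) = of_real (poly p x)"
  by (induction p) (auto simp: map_poly_pCons)

lemma sl_solutions_scale:
  assumes "y \<in> sl_solutions N f q w \<alpha> \<beta> z"
  shows "(\<lambda>n. c * y n) \<in> sl_solutions N f q w \<alpha> \<beta> z"
proof -
  from assms have eq: "sl_eq N f q w z y" and bc: "sl_bc N f \<alpha> \<beta> y"
    by (simp_all add: sl_solutions_def)
  have "sl_eq N f q w z (\<lambda>n. c * y n)"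
    unfolding sl_eq_def
  proof
    fix n assume "n \<in> {1..N}"
    with eq have "c * (- (of_real (f n) * (y (n+1) - y n) - of_real (f (n-1)) * (y n - y (n-1)))
        + of_real (q n) * y n) = c * (z * of_real (w n) * y n)"
      unfolding sl_eq_def by simp
    then show "- (of_real (f n) * (c * y (n+1) - c * y n) - of_real (f (n-1)) * (c * y n - c * y (n-1)))
        + of_real (q n) * (c * y n) = z * of_real (w n) * (c * y n)"
      by (simp add: algebra_simps)
  qed
  moreover have "sl_bc N f \<alpha> \<beta> (\<lambda>n. c * y n)"
  proof -
    from bc have "c * (of_real (cos \<alpha>) * y 0 - of_real (sin \<alpha>) * of_real (f 0) * (y 1 - y 0)) = 0"
      "c * (of_real (cos \<beta>) * y N - of_real (sin \<beta>) * of_real (f N) * (y (N+1) - y N)) = 0"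
      unfolding sl_bc_def by simp_all
    then show ?thesis unfolding sl_bc_def by (simp add: algebra_simps)
  qed
  ultimately show ?thesis using assms by (simp add: sl_solutions_def)
qed

lemma left_bc_data:
  fixes y0 u0 :: complex
  assumes "of_real (cos \<alpha>) * y0 = of_real (sin \<alpha>) * u0"
  defines "c \<equiv> of_real (sin \<alpha>) * y0 + of_real (cos \<alpha>) * u0"
  shows "y0 = c * of_real (sin \<alpha>) \<and> u0 = c * of_real (cos \<alpha>)"
proof -
  have "(of_real (sin \<alpha>))\<^sup>2 + (of_real (cos \<alpha>))\<^sup>2 = (1::complex)"
    by (simp flip: of_real_power of_real_add)
  with assms show ?thesis unfolding c_def by algebra
qed

interpretation complex_seq: vector_space "\<lambda>(c::complex) (y::nat \<Rightarrow> complex). (\<lambda>n. c * y n)"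
  by unfold_locales (auto simp: algebra_simps fun_eq_iff)

context sl_equation
begin

definition csol_y :: "real \<Rightarrow> complex \<Rightarrow> nat \<Rightarrow> complex" where
  "csol_y \<alpha> z n = poly (cpoly (sol_y [:sin \<alpha>:] [:cos \<alpha>:] n)) z"

definition csol_u :: "real \<Rightarrow> complex \<Rightarrow> nat \<Rightarrow> complex" where
  "csol_u \<alpha> z n = poly (cpoly (sol_u [:sin \<alpha>:] [:cos \<alpha>:] n)) z"

lemma csol_y_0: "csol_y \<alpha> z 0 = of_real (sin \<alpha>)" and csol_u_0: "csol_u \<alpha> z 0 = of_real (cos \<alpha>)"
  by (simp_all add: csol_y_def csol_u_def map_poly_pCons)

lemma csol_y_Suc: "csol_y \<alpha> z (Suc n) = csol_y \<alpha> z n + of_real (1 / f n) * csol_u \<alpha> z n"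
  by (simp add: csol_y_def csol_u_def sol_y_Suc cpoly_add cpoly_smult map_poly_pCons)

lemma csol_u_Suc:
  "csol_u \<alpha> z (Suc n) = csol_u \<alpha> z n + (of_real (q (Suc n)) - z * of_real (w (Suc n))) * csol_y \<alpha> z (Suc n)"
  by (simp add: csol_y_def csol_u_def sol_u_Suc[of _ _ n] cpoly_add cpoly_mult cpoly_minus
      cpoly_smult map_poly_pCons algebra_simps)

lemma poly_cpoly_char_poly:
  "poly (cpoly (char_poly \<alpha> \<beta>)) z = of_real (cos \<beta>) * csol_y \<alpha> z N - of_real (sin \<beta>) * csol_u \<alpha> z N"
  by (simp add: char_poly_def bc_poly_def cpoly_diff cpoly_smult csol_y_def csol_u_def)

lemma csol_y_1_or_2_nonzero: "csol_y \<alpha> z 1 \<noteq> 0 \<or> csol_y \<alpha> z 2 \<noteq> 0"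
proof (rule ccontr)
  assume "\<not> ?thesis"
  then have y: "csol_y \<alpha> z 1 = 0" "csol_y \<alpha> z 2 = 0" by auto
  have "f 1 \<noteq> 0" using f_nz N2 by simp
  with y have "csol_u \<alpha> z 1 = 0" using csol_y_Suc[of \<alpha> z 1] by (simp add: numeral_2_eq_2)
  with y have "cos \<alpha> = 0" using csol_u_Suc[of \<alpha> z 0] by (simp add: csol_u_0)
  with y have "sin \<alpha> = 0" using csol_y_Suc[of \<alpha> z 0] by (simp add: csol_y_0 csol_u_0)
  with \<open>cos \<alpha> = 0\<close> show False using sin_cos_not_both_zero[of \<alpha>] by simp
qed

definition eigenfunction :: "real \<Rightarrow> complex \<Rightarrow> nat \<Rightarrow> complex" where
  "eigenfunction \<alpha> z = (\<lambda>n. if n \<le> N + 1 then csol_y \<alpha> z n else 0)"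

lemma eigenfunction_nonzero: "eigenfunction \<alpha> z \<noteq> 0"
proof
  assume "eigenfunction \<alpha> z = 0"
  then have "eigenfunction \<alpha> z 1 = 0" "eigenfunction \<alpha> z 2 = 0" by simp_all
  with N2 csol_y_1_or_2_nonzero[of \<alpha> z] show False by (simp add: eigenfunction_def)
qed

lemma quasi_difference_csol: "n \<le> N \<Longrightarrow> of_real (f n) * (csol_y \<alpha> z (n+1) - csol_y \<alpha> z n) = csol_u \<alpha> z n"
  using csol_y_Suc[of \<alpha> z n] f_nz[of n] by (simp add: field_simps)

lemma eigenfunction_solution:
  assumes "poly (cpoly (char_poly \<alpha> \<beta>)) z = 0"
  shows "eigenfunction \<alpha> z \<in> sl_solutions N f q w \<alpha> \<beta> z"
proof -
  have "sl_eq N f q w z (eigenfunction \<alpha> z)"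
    unfolding sl_eq_def
  proof
    fix n assume n: "n \<in> {1..N}"
    then obtain m where m: "n = Suc m" by (cases n) auto
    with n show "- (of_real (f n) * (eigenfunction \<alpha> z (n+1) - eigenfunction \<alpha> z n)
        - of_real (f (n-1)) * (eigenfunction \<alpha> z n - eigenfunction \<alpha> z (n-1)))
        + of_real (q n) * eigenfunction \<alpha> z n = z * of_real (w n) * eigenfunction \<alpha> z n"
      using quasi_difference_csol[of n \<alpha> z] quasi_difference_csol[of m \<alpha> z] csol_u_Suc[of \<alpha> z m]
      by (simp add: eigenfunction_def algebra_simps)
  qed
  moreover have "sl_bc N f \<alpha> \<beta> (eigenfunction \<alpha> z)"
    using quasi_difference_csol[of N \<alpha> z] quasi_difference_csol[of 0 \<alpha> z] assms
    by (simp add: sl_bc_def eigenfunction_def csol_y_0 csol_u_0 poly_cpoly_char_poly algebra_simps)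
  ultimately show ?thesis by (simp add: sl_solutions_def eigenfunction_def)
qed

lemma solution_eq_multiple_eigenfunction:
  assumes y: "y \<in> sl_solutions N f q w \<alpha> \<beta> z"
  obtains c where "y = (\<lambda>n. c * eigenfunction \<alpha> z n)" "c * poly (cpoly (char_poly \<alpha> \<beta>)) z = 0"
proof -
  from y have eq: "sl_eq N f q w z y" and bc: "sl_bc N f \<alpha> \<beta> y" and zr: "\<forall>n>N+1. y n = 0"
    by (auto simp: sl_solutions_def)
  define u where "u n = of_real (f n) * (y (n+1) - y n)" for n
  define c where "c = of_real (sin \<alpha>) * y 0 + of_real (cos \<alpha>) * u 0"
  have yu: "y n = c * csol_y \<alpha> z n \<and> u n = c * csol_u \<alpha> z n" if "n \<le> N" for n
    using that
  proof (induction n)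
    case 0
    have "of_real (cos \<alpha>) * y 0 = of_real (sin \<alpha>) * u 0"
      using bc by (simp add: sl_bc_def u_def)
    from left_bc_data[OF this] show ?case by (simp add: c_def csol_y_0 csol_u_0)
  next
    case (Suc n)
    then have IH: "y n = c * csol_y \<alpha> z n" "u n = c * csol_u \<alpha> z n" by auto
    have y1: "y (Suc n) = c * csol_y \<alpha> z (Suc n)"
      using IH f_nz[of n] Suc.prems unfolding csol_y_Suc u_def by (simp add: field_simps)
    from Suc.prems eq[unfolded sl_eq_def, rule_format, of "Suc n"]
    have "- (of_real (f (Suc n)) * (y (Suc n + 1) - y (Suc n))
        - of_real (f n) * (y (Suc n) - y n)) + of_real (q (Suc n)) * y (Suc n)
        = z * of_real (w (Suc n)) * y (Suc n)" by simp
    then have "u (Suc n) = u n + (of_real (q (Suc n)) - z * of_real (w (Suc n))) * y (Suc n)"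
      unfolding u_def by (simp add: algebra_simps)
    with IH y1 show ?case by (simp add: csol_u_Suc algebra_simps)
  qed
  have "y (N+1) = c * csol_y \<alpha> z (N+1)"
    using yu[of N] f_nz[of N] by (simp add: u_def csol_y_Suc field_simps)
  with yu zr have "y = (\<lambda>n. c * eigenfunction \<alpha> z n)"
    by (auto simp: eigenfunction_def fun_eq_iff not_le le_Suc_eq)
  moreover have "c * poly (cpoly (char_poly \<alpha> \<beta>)) z = 0"
    using bc yu[of N] by (simp add: sl_bc_def u_def poly_cpoly_char_poly algebra_simps)
  ultimately show ?thesis by (rule that)
qed

lemma sl_solutions_char_root:
  assumes "poly (cpoly (char_poly \<alpha> \<beta>)) z = 0"
  shows "sl_solutions N f q w \<alpha> \<beta> z = complex_seq.span {eigenfunction \<alpha> z}"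
  unfolding complex_seq.span_singleton
  using solution_eq_multiple_eigenfunction sl_solutions_scale[OF eigenfunction_solution[OF assms]]
  by blast

lemma sl_is_eigenvalue_iff: "sl_is_eigenvalue N f q w \<alpha> \<beta> z \<longleftrightarrow> poly (cpoly (char_poly \<alpha> \<beta>)) z = 0"
proof
  assume "sl_is_eigenvalue N f q w \<alpha> \<beta> z"
  then obtain y where y: "y \<in> sl_solutions N f q w \<alpha> \<beta> z" "y \<noteq> 0"
    unfolding sl_is_eigenvalue_def by blast
  obtain c where c: "y = (\<lambda>n. c * eigenfunction \<alpha> z n)" "c * poly (cpoly (char_poly \<alpha> \<beta>)) z = 0"
    using solution_eq_multiple_eigenfunction[OF y(1)] .
  from c(1) y(2) have "c \<noteq> 0" by auto
  with c(2) show "poly (cpoly (char_poly \<alpha> \<beta>)) z = 0" by simp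
next
  assume "poly (cpoly (char_poly \<alpha> \<beta>)) z = 0"
  then show "sl_is_eigenvalue N f q w \<alpha> \<beta> z"
    unfolding sl_is_eigenvalue_def using eigenfunction_solution eigenfunction_nonzero by blast
qed

lemma sl_mult_char_root: "poly (cpoly (char_poly \<alpha> \<beta>)) z = 0 \<Longrightarrow> sl_mult N f q w \<alpha> \<beta> z = 1"
  unfolding sl_mult_def sl_solutions_char_root complex_seq.dim_span
  using eigenfunction_nonzero[of \<alpha> z]
  by (simp add: complex_seq.dim_eq_card_independent complex_seq.independent_insert zero_fun_def)

lemma csol_lagrange:
  "cnj (csol_y \<alpha> z n) * csol_u \<alpha> z n - csol_y \<alpha> z n * cnj (csol_u \<alpha> z n)
     = (cnj z - z) * of_real (\<Sum>k\<in>{1..n}. w k * (cmod (csol_y \<alpha> z k))\<^sup>2)"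
proof (induction n)
  case (Suc n)
  define A B A' where "A = csol_y \<alpha> z n" and "B = csol_u \<alpha> z n" and "A' = csol_y \<alpha> z (Suc n)"
  define g where "g = of_real (q (Suc n)) - z * of_real (w (Suc n))"
  have A': "A' = A + of_real (1 / f n) * B" by (simp add: A'_def A_def B_def csol_y_Suc)
  have u': "csol_u \<alpha> z (Suc n) = B + g * A'" by (simp add: csol_u_Suc B_def g_def A'_def)
  have step: "cnj (a + of_real r * b) * (b + h * (a + of_real r * b))
      - (a + of_real r * b) * cnj (b + h * (a + of_real r * b))
    = (cnj a * b - a * cnj b) + (h - cnj h) * ((a + of_real r * b) * cnj (a + of_real r * b))"
    for a b h :: complex and r :: real
    by (simp add: algebra_simps)
  have gg: "(g - cnj g) * (A' * cnj A') = (cnj z - z) * of_real (w (Suc n) * (cmod A')\<^sup>2)"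
    unfolding complex_norm_square[symmetric] g_def by (simp add: algebra_simps)
  have G: "cnj A' * csol_u \<alpha> z (Suc n) - A' * cnj (csol_u \<alpha> z (Suc n))
      = (cnj A * B - A * cnj B) + (cnj z - z) * of_real (w (Suc n) * (cmod A')\<^sup>2)"
    using gg unfolding u' A' step by simp
  have S: "(\<Sum>k\<in>{1..Suc n}. w k * (cmod (csol_y \<alpha> z k))\<^sup>2)
      = (\<Sum>k\<in>{1..n}. w k * (cmod (csol_y \<alpha> z k))\<^sup>2) + w (Suc n) * (cmod A')\<^sup>2"
    by (simp add: A'_def)
  show ?case
    unfolding S of_real_add distrib_left G[unfolded A_def B_def A'_def] A'_def Suc.IH ..
qed (simp add: csol_y_0 csol_u_0)

lemma char_root_real:
  assumes root: "poly (cpoly (char_poly \<alpha> \<beta>)) z = 0"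
  shows "z = of_real (Re z)"
proof -
  let ?A = "csol_y \<alpha> z N" and ?B = "csol_u \<alpha> z N"
  have "of_real (cos \<beta>) * ?A = of_real (sin \<beta>) * ?B"
    using root by (simp add: poly_cpoly_char_poly)
  then have "cnj ?A * ?B - ?A * cnj ?B = 0"
  proof (cases "sin \<beta> = 0")
    case True
    with \<open>of_real (cos \<beta>) * ?A = of_real (sin \<beta>) * ?B\<close> sin_cos_not_both_zero[of \<beta>]
    show ?thesis by simp
  next
    case False
    with \<open>of_real (cos \<beta>) * ?A = of_real (sin \<beta>) * ?B\<close>
    have "?B = of_real (cos \<beta> / sin \<beta>) * ?A" by (simp add: field_simps)
    then show ?thesis by simp
  qed
  let ?S = "\<Sum>k\<in>{1..N}. w k * (cmod (csol_y \<alpha> z k))\<^sup>2"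
  have "(cnj z - z) * of_real ?S = 0"
    using \<open>cnj ?A * ?B - ?A * cnj ?B = 0\<close> by (simp only: csol_lagrange)
  then have "cnj z - z = 0 \<or> of_real ?S = (0::complex)" by (simp only: mult_eq_0_iff)
  moreover have "?S > 0"
  proof -
    obtain k where "k \<in> {1, 2}" "csol_y \<alpha> z k \<noteq> 0" using csol_y_1_or_2_nonzero by blast
    with N2 have k: "k \<in> {1..N}" "csol_y \<alpha> z k \<noteq> 0" by auto
    then have "0 < w k * (cmod (csol_y \<alpha> z k))\<^sup>2" using w_pos by simp
    then show ?thesis by (intro sum_pos2[OF _ k(1)]) (simp_all add: w_pos less_imp_le)
  qed
  then have "of_real ?S \<noteq> (0::complex)" by (simp only: of_real_eq_0_iff)
  ultimately have "cnj z - z = 0" by blast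
  then show ?thesis by (simp add: complex_eq_iff)
qed

lemma char_poly_simple_root: "poly (char_poly \<alpha> \<beta>) x = 0 \<Longrightarrow> poly (pderiv (char_poly \<alpha> \<beta>)) x \<noteq> 0"
proof
  assume "poly (char_poly \<alpha> \<beta>) x = 0" "poly (pderiv (char_poly \<alpha> \<beta>)) x = 0"
  then have "poly (poly_wronskian (char_poly \<alpha> \<beta>) (char_poly \<alpha> (\<beta> + pi/2))) x = 0"
    by (simp add: poly_wronskian_def)
  with sol_energy_char_pos[of \<alpha> x] show False
    unfolding poly_wronskian_char_poly_beta by simp
qed

lemma char_poly_nonzero: "char_poly \<alpha> \<beta> \<noteq> 0"
  using char_poly_simple_root[of \<alpha> \<beta> 0] by auto

definition char_roots :: "real \<Rightarrow> real \<Rightarrow> real set" where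
  "char_roots \<alpha> \<beta> = {x. poly (char_poly \<alpha> \<beta>) x = 0}"

lemma complex_char_roots:
  "{z. poly (cpoly (char_poly \<alpha> \<beta>)) z = 0} = complex_of_real ` char_roots \<alpha> \<beta>"
proof (intro equalityI subsetI)
  fix z assume "z \<in> {z. poly (cpoly (char_poly \<alpha> \<beta>)) z = 0}"
  with char_root_real[of \<alpha> \<beta> z] show "z \<in> complex_of_real ` char_roots \<alpha> \<beta>"
    unfolding char_roots_def
    by (metis (mono_tags, lifting) image_eqI mem_Collect_eq of_real_eq_0_iff poly_cpoly_of_real)
qed (auto simp: char_roots_def poly_cpoly_of_real)

lemma card_char_roots: "card (char_roots \<alpha> \<beta>) = degree (char_poly \<alpha> \<beta>)"
proof -
  let ?p = "cpoly (char_poly \<alpha> \<beta>)"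
  have "rsquarefree ?p"
    unfolding rsquarefree_roots
  proof (intro allI notI)
    fix a assume a: "poly ?p a = 0 \<and> poly (pderiv ?p) a = 0"
    then have "a = of_real (Re a)" using char_root_real by blast
    with a char_poly_simple_root show False
      by (metis of_real_eq_0_iff poly_cpoly_of_real cpoly_pderiv)
  qed
  moreover have "lead_coeff ?p \<noteq> 0" using char_poly_nonzero by (simp add: map_poly_eq_0_iff)
  ultimately have "degree ?p = degree (\<Prod>z|poly ?p z = 0. [:-z, 1:])"
    by (subst (1) complex_poly_decompose_rsquarefree[symmetric]) simp_all
  also have "\<dots> = card {z. poly ?p z = 0}"
    by (subst degree_prod_sum_eq) auto
  also have "\<dots> = card (char_roots \<alpha> \<beta>)"
    unfolding complex_char_roots by (rule card_image) (simp add: inj_on_def)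
  finally show ?thesis by (simp add: degree_map_poly)
qed

lemma sl_eig_eq_sorted_nth: "sl_eig N f q w \<alpha> \<beta> k = sorted_nth (char_roots \<alpha> \<beta>) k"
proof -
  let ?R = "char_roots \<alpha> \<beta>"
  have "sl_eigs_mset N f q w \<alpha> \<beta> = (\<Sum>z\<in>{z. poly (cpoly (char_poly \<alpha> \<beta>)) z = 0}. {#z#})"
    unfolding sl_eigs_mset_def sl_is_eigenvalue_iff by (intro sum.cong) (auto simp: sl_mult_char_root)
  also have "\<dots> = mset_set (complex_of_real ` ?R)" by (simp add: complex_char_roots)
  finally have "image_mset Re (sl_eigs_mset N f q w \<alpha> \<beta>) = image_mset Re (mset_set (complex_of_real ` ?R))"
    by simp
  also have "\<dots> = mset_set (Re ` complex_of_real ` ?R)"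
    by (rule image_mset_mset_set) (auto simp: inj_on_def)
  also have "Re ` complex_of_real ` ?R = ?R" by (force simp: image_image)
  finally show ?thesis unfolding sl_eig_def by (simp only: sorted_list_of_mset_set)
qed
end

section \<open>Counting and ordering the eigenvalues\<close>

lemma sl_xi_props:
  assumes f0: "f 0 \<noteq> 0"
  shows "0 < sl_xi f \<and> sl_xi f < pi \<and> sin (sl_xi f) + cos (sl_xi f) / f 0 = 0"
proof -
  define t where "t = arctan (-1 / f 0)"
  have b: "- (pi/2) < t" "t < pi/2" unfolding t_def using arctan_bounded by auto
  have "cos t > 0" using b by (intro cos_gt_zero_pi) auto
  then have "sin t + cos t / f 0 = cos t * (tan t + 1 / f 0)" by (simp add: tan_def field_simps)
  then have e: "sin t + cos t / f 0 = 0" by (simp add: t_def tan_arctan)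
  show ?thesis
  proof (cases "f 0 > 0")
    case True
    then have "t < 0" by (simp add: t_def)
    moreover have "sin (t + pi) + cos (t + pi) / f 0 = - (sin t + cos t / f 0)" by simp
    ultimately show ?thesis using True b e by (simp add: sl_xi_def t_def)
  next
    case False
    with f0 have "t > 0" by (simp add: t_def)
    then show ?thesis using False b e by (simp add: sl_xi_def t_def)
  qed
qed

lemma sin_diff_nonzero:
  assumes "0 \<le> \<alpha>" "\<alpha> < pi" "0 \<le> \<alpha>'" "\<alpha>' < pi" "\<alpha> \<noteq> \<alpha>'"
  shows "sin (\<alpha> - \<alpha>') \<noteq> 0"
proof
  assume "sin (\<alpha> - \<alpha>') = 0"
  moreover have "- pi < \<alpha> - \<alpha>'" "\<alpha> - \<alpha>' < pi" using assms by linarith+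
  ultimately have "\<alpha> - \<alpha>' = 0" using sin_eq_0_pi by blast
  with assms show False by simp
qed

context sl_equation
begin

abbreviation xi :: real where "xi \<equiv> sl_xi f"

lemma xi_bounds: "0 < xi" "xi < pi"
  using sl_xi_props[of f] f_nz[of 0] by auto

lemma xi_nonzero: "0 \<noteq> xi"
  using xi_bounds by simp

text \<open>\<open>xi\<close> is the unique boundary angle for which the left boundary condition forces
  \<open>y\<^sub>1 = 0\<close>; this lowers the degree of the characteristic polynomial by one.\<close>

lemma sl_xi_unique:
  assumes "0 \<le> \<alpha>" "\<alpha> < pi" "sin \<alpha> + cos \<alpha> / f 0 = 0"
  shows "\<alpha> = xi"
proof -
  have f0: "f 0 \<noteq> 0" using f_nz by simp
  have "sin xi + cos xi / f 0 = 0" using sl_xi_props[of f, OF f0] by blast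
  with assms(3) f0 have a: "sin \<alpha> * f 0 = - cos \<alpha>" and b: "sin xi * f 0 = - cos xi"
    by (simp_all add: field_simps)
  have "f 0 * sin (\<alpha> - xi) = (sin \<alpha> * f 0) * cos xi - cos \<alpha> * (sin xi * f 0)"
    by (simp add: sin_diff algebra_simps)
  also have "\<dots> = 0" unfolding a b by simp
  finally have "sin (\<alpha> - xi) = 0" using f0 by simp
  then show ?thesis using sin_diff_nonzero[of \<alpha> xi] assms xi_bounds by fastforce
qed

lemma degree_sol_iter:
  assumes "n0 + k \<le> N" "degree (sol_y a b n0) < degree (sol_u a b n0)"
  shows "degree (sol_y a b (n0 + k)) < degree (sol_u a b (n0 + k)) \<and>
    degree (sol_u a b (n0 + k)) = degree (sol_u a b n0) + k \<and>
    (k > 0 \<longrightarrow> degree (sol_y a b (n0 + k)) + 1 = degree (sol_u a b (n0 + k)))"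
  using assms
proof (induction k)
  case (Suc k)
  let ?n = "n0 + k"
  from Suc have IH: "degree (sol_y a b ?n) < degree (sol_u a b ?n)"
    "degree (sol_u a b ?n) = degree (sol_u a b n0) + k" by auto
  have fn: "f ?n \<noteq> 0" and wn: "w (Suc ?n) \<noteq> 0"
    using f_nz w_pos[of "Suc ?n"] Suc.prems by auto
  have dY: "degree (sol_y a b (Suc ?n)) = degree (sol_u a b ?n)"
    unfolding sol_y_Suc using IH(1) fn by (simp add: degree_add_eq_right)
  then have "sol_y a b (Suc ?n) \<noteq> 0" using IH(1) by auto
  with dY wn have "degree ([:q (Suc ?n), - w (Suc ?n):] * sol_y a b (Suc ?n)) = Suc (degree (sol_u a b ?n))"
    by (subst degree_mult_eq) auto
  then have "degree (sol_u a b (Suc ?n)) = Suc (degree (sol_u a b ?n))"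
    unfolding sol_u_Suc[of a b ?n] by (subst degree_add_eq_right) auto
  with dY IH show ?case by simp
qed simp

lemma degree_sol_char:
  assumes "0 \<le> \<alpha>" "\<alpha> < pi"
  shows "degree (sol_u [:sin \<alpha>:] [:cos \<alpha>:] N) = (if \<alpha> = xi then N - 1 else N) \<and>
         degree (sol_y [:sin \<alpha>:] [:cos \<alpha>:] N) + 1 = degree (sol_u [:sin \<alpha>:] [:cos \<alpha>:] N)"
proof -
  let ?a = "[:sin \<alpha>:]" and ?b = "[:cos \<alpha>:]"
  have f1: "f 1 \<noteq> 0" and w12: "w 1 \<noteq> 0" "w 2 \<noteq> 0"
    using f_nz[of 1] w_pos[of 1] w_pos[of 2] N2 by auto
  have Y1: "sol_y ?a ?b 1 = [:sin \<alpha> + cos \<alpha> / f 0:]" using sol_y_Suc[of ?a ?b 0] by simp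
  show ?thesis
  proof (cases "\<alpha> = xi")
    case False
    then have "sin \<alpha> + cos \<alpha> / f 0 \<noteq> 0" using sl_xi_unique assms by blast
    with w12 Y1 have "degree (sol_u ?a ?b 1) = 1"
      using sol_u_Suc[of ?a ?b 0] by (simp add: degree_add_eq_right)
    with Y1 degree_sol_iter[of 1 "N - 1" ?a ?b] N2 False show ?thesis by simp
  next
    case True
    have "sin \<alpha> + cos \<alpha> / f 0 = 0" using sl_xi_props[of f] f_nz[of 0] True by auto
    moreover from this have "cos \<alpha> \<noteq> 0" using sin_cos_not_both_zero[of \<alpha>] by auto
    ultimately have Y1': "sol_y ?a ?b 1 = 0" and c: "cos \<alpha> / f 1 \<noteq> 0" using Y1 f1 by simp_all
    then have U1: "sol_u ?a ?b 1 = [:cos \<alpha>:]" using sol_u_Suc[of ?a ?b 0] by simp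
    with Y1' have Y2: "sol_y ?a ?b 2 = [:cos \<alpha> / f 1:]"
      using sol_y_Suc[of ?a ?b 1] by (simp add: numeral_2_eq_2)
    with U1 c w12 have dU2: "degree (sol_u ?a ?b 2) = 1"
      using sol_u_Suc[of ?a ?b 1] by (simp add: degree_add_eq_right numeral_2_eq_2)
    have "2 + (N - 2) = N" using N2 by simp
    with Y2 dU2 degree_sol_iter[of 2 "N - 2" ?a ?b] N2 True show ?thesis by (cases "N = 2") auto
  qed
qed

lemma card_char_roots_eq:
  assumes "0 \<le> \<alpha>" "\<alpha> < pi" "0 < \<beta>" "\<beta> \<le> pi"
  shows "card (char_roots \<alpha> \<beta>) = (if \<alpha> = xi then N - 1 else N) - (if \<beta> = pi then 1 else 0)"
proof -
  let ?y = "sol_y [:sin \<alpha>:] [:cos \<alpha>:] N" and ?u = "sol_u [:sin \<alpha>:] [:cos \<alpha>:] N"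
  note d = degree_sol_char[OF assms(1,2)]
  show ?thesis
  proof (cases "\<beta> = pi")
    case True
    then have "char_poly \<alpha> \<beta> = - ?y" by (simp add: char_poly_def bc_poly_def)
    then show ?thesis using d True by (cases "\<alpha> = xi") (auto simp: card_char_roots)
  next
    case False
    then have sb: "sin \<beta> > 0" using assms(3,4) by (intro sin_gt_zero) auto
    have "char_poly \<alpha> \<beta> = smult (cos \<beta>) ?y + smult (- sin \<beta>) ?u"
      by (simp add: char_poly_def bc_poly_def)
    moreover have "degree (smult (cos \<beta>) ?y) < degree (smult (- sin \<beta>) ?u)"
      using d sb degree_smult_le[of "cos \<beta>" ?y] by simp
    ultimately have "degree (char_poly \<alpha> \<beta>) = degree (smult (- sin \<beta>) ?u)"
      by (simp only: degree_add_eq_right)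
    then have "degree (char_poly \<alpha> \<beta>) = degree ?u" using sb by simp
    then show ?thesis using d False by (simp add: card_char_roots)
  qed
qed

lemma poly_wronskian_char_poly_alpha_definite:
  assumes "sin (\<alpha> - \<alpha>') \<noteq> 0"
  shows "\<forall>t. sin (\<alpha> - \<alpha>') * poly (poly_wronskian (char_poly \<alpha> \<beta>) (char_poly \<alpha>' \<beta>)) t > 0"
proof
  fix t
  have "sin (\<alpha> - \<alpha>') * sin (\<alpha> - \<alpha>') > 0" using assms by (simp flip: power2_eq_square)
  with sol_energy_right_bc_pos[of \<beta> t]
  show "sin (\<alpha> - \<alpha>') * poly (poly_wronskian (char_poly \<alpha> \<beta>) (char_poly \<alpha>' \<beta>)) t > 0"
    unfolding poly_wronskian_char_poly_alpha by (simp add: mult.assoc[symmetric])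
qed

lemma char_roots_interlace_alpha:
  assumes "sin (\<alpha> - \<alpha>') \<noteq> 0"
  shows "strictly_interlace (char_roots \<alpha> \<beta>) (char_roots \<alpha>' \<beta>)"
  unfolding char_roots_def
  by (rule wronskian_definite_roots_interlace[OF char_poly_nonzero char_poly_nonzero
        poly_wronskian_char_poly_alpha_definite[OF assms]])

lemma char_roots_interlace_beta:
  assumes "0 < \<beta>" "\<beta> < pi"
  shows "strictly_interlace (char_roots \<alpha> \<beta>) (char_roots \<alpha> pi)"
  unfolding char_roots_def
proof (rule wronskian_definite_roots_interlace[OF char_poly_nonzero char_poly_nonzero])
  have "sin (pi - \<beta>) > 0" using assms by (intro sin_gt_zero) auto
  then show "\<forall>t. sin (pi - \<beta>) * poly (poly_wronskian (char_poly \<alpha> \<beta>) (char_poly \<alpha> pi)) t > 0"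
    unfolding poly_wronskian_char_poly_beta using sol_energy_char_pos by simp
qed

lemma char_poly_xi_combination:
  assumes "sin \<alpha> \<noteq> 0"
  shows "char_poly xi \<beta> = smult (sin (\<alpha> - xi) / sin \<alpha>) (char_poly 0 \<beta>) + smult (sin xi / sin \<alpha>) (char_poly \<alpha> \<beta>)"
proof -
  let ?C = "bc_poly 1 0 \<beta>" and ?S = "bc_poly 0 1 \<beta>"
  have "smult (sin (\<alpha> - xi) / sin \<alpha>) (char_poly 0 \<beta>) + smult (sin xi / sin \<alpha>) (char_poly \<alpha> \<beta>)
     = smult (sin xi) ?C + smult ((sin (\<alpha> - xi) + sin xi * cos \<alpha>) / sin \<alpha>) ?S"
    unfolding char_poly_sin_cos using assms
    by (simp add: smult_add_right add_divide_distrib algebra_simps smult_add_left)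
  also have "(sin (\<alpha> - xi) + sin xi * cos \<alpha>) / sin \<alpha> = cos xi"
    using assms by (simp add: sin_diff field_simps)
  finally show ?thesis by (simp add: char_poly_sin_cos)
qed


abbreviation root_nth :: "real \<Rightarrow> real \<Rightarrow> nat \<Rightarrow> real" where
  "root_nth \<alpha> \<beta> n \<equiv> sorted_nth (char_roots \<alpha> \<beta>) n"

lemma root_nth_interlace_beta:
  assumes "0 \<le> \<alpha>" "\<alpha> < pi" "0 < \<beta>" "\<beta> < pi" "i < card (char_roots \<alpha> pi)"
  shows "root_nth \<alpha> \<beta> i < root_nth \<alpha> pi i \<and> root_nth \<alpha> pi i < root_nth \<alpha> \<beta> (i+1)"
proof -
  have "card (char_roots \<alpha> \<beta>) = card (char_roots \<alpha> pi) + 1"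
    using card_char_roots_eq[of \<alpha> \<beta>] card_char_roots_eq[of \<alpha> pi] assms N2 by auto
  with strictly_interlace_one_more[OF char_roots_interlace_beta[OF assms(3,4)]] assms(5)
  show ?thesis by blast
qed

lemma root_nth_interlace_xi:
  assumes "0 < \<beta>" "\<beta> \<le> pi" "i < card (char_roots xi \<beta>)"
  shows "root_nth 0 \<beta> i < root_nth xi \<beta> i \<and> root_nth xi \<beta> i < root_nth 0 \<beta> (i+1)"
proof -
  have "card (char_roots 0 \<beta>) = card (char_roots xi \<beta>) + 1"
    using card_char_roots_eq[of 0 \<beta>] card_char_roots_eq[of xi \<beta>] assms xi_bounds N2 by auto
  moreover have "sin (0 - xi) \<noteq> 0" using sin_diff_nonzero[of 0 xi] xi_bounds by simp
  ultimately show ?thesis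
    using strictly_interlace_one_more[OF char_roots_interlace_alpha] assms(3) by blast
qed

lemma root_nth_0_less_xi_root:
  assumes "0 \<le> \<alpha>" "\<alpha> < pi" "\<alpha> \<noteq> xi" "0 < \<beta>" "\<beta> \<le> pi" "poly (char_poly xi \<beta>) t = 0"
  shows "root_nth \<alpha> \<beta> 0 < t"
proof -
  have "card (char_roots \<alpha> \<beta>) = card (char_roots xi \<beta>) + 1"
    using card_char_roots_eq[of \<alpha> \<beta>] card_char_roots_eq[of xi \<beta>] assms xi_bounds N2 by auto
  moreover have "sin (\<alpha> - xi) \<noteq> 0" using sin_diff_nonzero[of \<alpha> xi] xi_bounds assms by simp
  ultimately show ?thesis
    using strictly_interlace_larger_starts_first[OF char_roots_interlace_alpha] assms(6)
    by (simp add: char_roots_def)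
qed

text \<open>Which of two interlacing families starts first is decided by writing \<open>char_poly xi \<beta>\<close>,
  whose roots all lie above the first root of either family, as a combination of the two.\<close>

lemma root_nth_0_less:
  assumes "0 \<le> \<alpha>" "\<alpha> < pi" "\<alpha> \<noteq> xi" "0 \<le> \<alpha>'" "\<alpha>' < pi" "\<alpha>' \<noteq> xi" "\<alpha> \<noteq> \<alpha>'"
    and "0 < \<beta>" "\<beta> \<le> pi"
    and comb: "char_poly xi \<beta> = smult a (char_poly \<alpha> \<beta>) + smult b (char_poly \<alpha>' \<beta>)"
    and ab: "sin (\<alpha> - \<alpha>') * a * b > 0"
  shows "root_nth \<alpha>' \<beta> 0 < root_nth \<alpha> \<beta> 0"
proof -
  have s: "sin (\<alpha> - \<alpha>') \<noteq> 0" using sin_diff_nonzero assms(1,2,4,5,7) by blast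
  have root: "\<exists>x. poly (char_poly a' \<beta>) x = 0" if "0 \<le> a'" "a' < pi" "a' \<noteq> xi" for a'
  proof -
    have "card (char_roots a' \<beta>) > 0"
      using card_char_roots_eq[of a' \<beta>] that assms(8,9) N2 by auto
    then show ?thesis by (auto simp: card_gt_0_iff char_roots_def)
  qed
  with assms(1-6) have "\<exists>x. poly (char_poly \<alpha> \<beta>) x = 0" "\<exists>x. poly (char_poly \<alpha>' \<beta>) x = 0"
    by blast+
  with wronskian_definite_first_root_less[OF char_roots_interlace_alpha[OF s, unfolded char_roots_def]
      poly_wronskian_char_poly_alpha_definite[OF s] ab]
    root_nth_0_less_xi_root[OF assms(4-6,8,9)] comb
  show ?thesis by (simp add: char_roots_def)
qed

lemma root_nth_0_alpha_below_xi:
  assumes "0 < \<alpha>" "\<alpha> < xi" "0 < \<beta>" "\<beta> \<le> pi"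
  shows "root_nth \<alpha> \<beta> 0 < root_nth 0 \<beta> 0"
proof (rule root_nth_0_less)
  have "sin \<alpha> > 0" "sin (xi - \<alpha>) > 0" "sin xi > 0"
    using assms xi_bounds by (auto intro!: sin_gt_zero)
  moreover have "sin (\<alpha> - xi) = - sin (xi - \<alpha>)" by (simp flip: sin_minus)
  ultimately have "sin (0 - \<alpha>) < 0" "sin (\<alpha> - xi) / sin \<alpha> < 0" "sin xi / sin \<alpha> > 0"
    by (simp_all add: divide_neg_pos)
  then show "sin (0 - \<alpha>) * (sin (\<alpha> - xi) / sin \<alpha>) * (sin xi / sin \<alpha>) > 0"
    by (intro mult_pos_pos mult_neg_neg)
  show "char_poly xi \<beta> = smult (sin (\<alpha> - xi) / sin \<alpha>) (char_poly 0 \<beta>) + smult (sin xi / sin \<alpha>) (char_poly \<alpha> \<beta>)"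
    by (rule char_poly_xi_combination) (use \<open>sin \<alpha> > 0\<close> in simp)
qed (use assms xi_bounds in auto)

lemma root_nth_0_alpha_above_xi:
  assumes "xi < \<alpha>" "\<alpha> < pi" "0 < \<beta>" "\<beta> \<le> pi"
  shows "root_nth 0 \<beta> 0 < root_nth \<alpha> \<beta> 0"
proof (rule root_nth_0_less)
  have "sin \<alpha> > 0" "sin (\<alpha> - xi) > 0" "sin xi > 0"
    using assms xi_bounds by (auto intro!: sin_gt_zero)
  then show "sin (\<alpha> - 0) * (sin xi / sin \<alpha>) * (sin (\<alpha> - xi) / sin \<alpha>) > 0" by simp
  show "char_poly xi \<beta> = smult (sin xi / sin \<alpha>) (char_poly \<alpha> \<beta>) + smult (sin (\<alpha> - xi) / sin \<alpha>) (char_poly 0 \<beta>)"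
    using char_poly_xi_combination[of \<alpha> \<beta>] \<open>sin \<alpha> > 0\<close> by (simp add: add.commute)
qed (use assms xi_bounds in auto)

lemma root_nth_alternate_alpha:
  assumes "0 \<le> \<alpha>" "\<alpha> < pi" "\<alpha> \<noteq> xi" "0 \<le> \<alpha>'" "\<alpha>' < pi" "\<alpha>' \<noteq> xi" "0 < \<beta>" "\<beta> \<le> pi"
    and first: "root_nth \<alpha> \<beta> 0 < root_nth \<alpha>' \<beta> 0"
  shows "i < card (char_roots \<alpha> \<beta>) \<Longrightarrow> root_nth \<alpha> \<beta> i < root_nth \<alpha>' \<beta> i"
    and "i + 1 < card (char_roots \<alpha> \<beta>) \<Longrightarrow> root_nth \<alpha>' \<beta> i < root_nth \<alpha> \<beta> (i+1)"
proof -
  have c: "card (char_roots \<alpha>' \<beta>) = card (char_roots \<alpha> \<beta>)"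
    using card_char_roots_eq[of \<alpha> \<beta>] card_char_roots_eq[of \<alpha>' \<beta>] assms by auto
  from first have "\<alpha> \<noteq> \<alpha>'" by auto
  then have "sin (\<alpha> - \<alpha>') \<noteq> 0" using sin_diff_nonzero assms(1,2,4,5) by blast
  note I = strictly_interlace_alternate[OF char_roots_interlace_alpha[OF this] first]
  show "i < card (char_roots \<alpha> \<beta>) \<Longrightarrow> root_nth \<alpha> \<beta> i < root_nth \<alpha>' \<beta> i"
    using I(1) c by simp
  show "i + 1 < card (char_roots \<alpha> \<beta>) \<Longrightarrow> root_nth \<alpha>' \<beta> i < root_nth \<alpha> \<beta> (i+1)"
    using I(2) c by simp
qed


lemma root_order_alpha_below_xi:
  assumes "0 < \<alpha>0" "\<alpha>0 < xi" "0 < \<beta>0" "\<beta>0 < pi"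
  shows "(\<forall>n. n + 2 \<le> N \<longrightarrow>
      root_nth \<alpha>0 \<beta>0 n < root_nth 0 \<beta>0 n \<and> root_nth \<alpha>0 \<beta>0 n < root_nth \<alpha>0 pi n \<and>
      root_nth 0 \<beta>0 n < root_nth \<alpha>0 \<beta>0 (n+1) \<and> root_nth \<alpha>0 pi n < root_nth \<alpha>0 \<beta>0 (n+1)) \<and>
    root_nth \<alpha>0 \<beta>0 (N-1) < root_nth 0 \<beta>0 (N-1)"
proof -
  have \<alpha>0: "0 \<le> \<alpha>0" "\<alpha>0 < pi" "\<alpha>0 \<noteq> xi" using assms xi_bounds by auto
  have c: "card (char_roots \<alpha>0 \<beta>0) = N" "card (char_roots \<alpha>0 pi) = N - 1"
    using card_char_roots_eq[of \<alpha>0 \<beta>0] card_char_roots_eq[of \<alpha>0 pi] \<alpha>0 assms by auto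
  have first: "root_nth \<alpha>0 \<beta>0 0 < root_nth 0 \<beta>0 0"
    using root_nth_0_alpha_below_xi assms by simp
  note A = root_nth_alternate_alpha[OF \<alpha>0 order_refl pi_gt_zero xi_nonzero assms(3) _ first]
  note B = root_nth_interlace_beta[OF \<alpha>0(1,2) assms(3,4)]
  show ?thesis
    using A B c N2 assms by auto

qed

lemma root_order_alpha_above_xi:
  assumes "xi < \<alpha>0" "\<alpha>0 < pi" "0 < \<beta>0" "\<beta>0 < pi"
  shows "root_nth 0 \<beta>0 0 < root_nth \<alpha>0 \<beta>0 0 \<and>
    (\<forall>n. n + 2 \<le> N \<longrightarrow>
      root_nth \<alpha>0 \<beta>0 n < root_nth 0 \<beta>0 (n+1) \<and> root_nth \<alpha>0 \<beta>0 n < root_nth \<alpha>0 pi n \<and>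
      root_nth 0 \<beta>0 (n+1) < root_nth \<alpha>0 \<beta>0 (n+1) \<and> root_nth \<alpha>0 pi n < root_nth \<alpha>0 \<beta>0 (n+1))"
proof -
  have \<alpha>0: "0 \<le> \<alpha>0" "\<alpha>0 < pi" "\<alpha>0 \<noteq> xi" using assms xi_bounds by auto
  have c: "card (char_roots 0 \<beta>0) = N" "card (char_roots \<alpha>0 pi) = N - 1"
    using card_char_roots_eq[of 0 \<beta>0] card_char_roots_eq[of \<alpha>0 pi] \<alpha>0 assms xi_bounds by auto
  have first: "root_nth 0 \<beta>0 0 < root_nth \<alpha>0 \<beta>0 0"
    using root_nth_0_alpha_above_xi assms by simp
  note A = root_nth_alternate_alpha[OF order_refl pi_gt_zero xi_nonzero \<alpha>0 assms(3) _ first]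
  note B = root_nth_interlace_beta[OF \<alpha>0(1,2) assms(3,4)]
  show ?thesis
    using first A B c N2 assms by auto
qed

lemma root_order_alpha_xi:
  assumes "0 < \<beta>0" "\<beta>0 < pi"
  shows "root_nth 0 \<beta>0 0 < root_nth xi \<beta>0 0 \<and>
    (\<forall>n. n + 3 \<le> N \<longrightarrow>
      root_nth xi \<beta>0 n < root_nth 0 \<beta>0 (n+1) \<and> root_nth xi \<beta>0 n < root_nth xi pi n \<and>
      root_nth 0 \<beta>0 (n+1) < root_nth xi \<beta>0 (n+1) \<and> root_nth xi pi n < root_nth xi \<beta>0 (n+1)) \<and>
    root_nth xi \<beta>0 (N-2) < root_nth 0 \<beta>0 (N-1)"
proof -
  have c: "card (char_roots xi \<beta>0) = N - 1" "card (char_roots xi pi) = N - 2"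
    using card_char_roots_eq[of xi \<beta>0] card_char_roots_eq[of xi pi] xi_bounds assms by auto
  note X = root_nth_interlace_xi[OF assms(1) less_imp_le[OF assms(2)]]
  note B = root_nth_interlace_beta[OF less_imp_le[OF xi_bounds(1)] xi_bounds(2) assms]
  have "root_nth 0 \<beta>0 0 < root_nth xi \<beta>0 0" using X[of 0] c N2 by simp
  moreover have "root_nth xi \<beta>0 n < root_nth 0 \<beta>0 (n+1) \<and> root_nth xi \<beta>0 n < root_nth xi pi n \<and>
      root_nth 0 \<beta>0 (n+1) < root_nth xi \<beta>0 (n+1) \<and> root_nth xi pi n < root_nth xi \<beta>0 (n+1)"
    if "n + 3 \<le> N" for n
    using X[of n] X[of "n+1"] B[of n] c that by simp
  moreover have "N - 2 + 1 = N - 1" using N2 by simp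
  then have "root_nth xi \<beta>0 (N-2) < root_nth 0 \<beta>0 (N-1)" using X[of "N-2"] c N2 by simp
  ultimately show ?thesis by blast
qed

lemma root_order_pi_alpha_below_xi:
  assumes "0 < \<alpha>0" "\<alpha>0 < xi" "n + 2 \<le> N"
  shows "root_nth \<alpha>0 pi n < root_nth 0 pi n \<and> (n + 3 \<le> N \<longrightarrow> root_nth 0 pi n < root_nth \<alpha>0 pi (n+1))"
proof -
  have \<alpha>0: "0 \<le> \<alpha>0" "\<alpha>0 < pi" "\<alpha>0 \<noteq> xi" using assms xi_bounds by auto
  have c: "card (char_roots \<alpha>0 pi) = N - 1"
    using card_char_roots_eq[of \<alpha>0 pi] \<alpha>0 by auto
  have first: "root_nth \<alpha>0 pi 0 < root_nth 0 pi 0"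
    using root_nth_0_alpha_below_xi assms by simp
  note A = root_nth_alternate_alpha[OF \<alpha>0 order_refl pi_gt_zero xi_nonzero pi_gt_zero order_refl first]
  show ?thesis using A c assms by auto
qed

lemma root_order_pi_alpha_above_xi:
  assumes "xi < \<alpha>0" "\<alpha>0 < pi" "n + 2 \<le> N"
  shows "root_nth 0 pi n < root_nth \<alpha>0 pi n \<and> (n + 3 \<le> N \<longrightarrow> root_nth \<alpha>0 pi n < root_nth 0 pi (n+1))"
proof -
  have \<alpha>0: "0 \<le> \<alpha>0" "\<alpha>0 < pi" "\<alpha>0 \<noteq> xi" using assms xi_bounds by auto
  have c: "card (char_roots 0 pi) = N - 1"
    using card_char_roots_eq[of 0 pi] xi_bounds by auto
  have first: "root_nth 0 pi 0 < root_nth \<alpha>0 pi 0"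
    using root_nth_0_alpha_above_xi assms by simp
  note A = root_nth_alternate_alpha[OF order_refl pi_gt_zero xi_nonzero \<alpha>0 pi_gt_zero order_refl first]
  show ?thesis using A c assms by auto
qed

lemma root_order_pi_xi:
  assumes "n + 3 \<le> N"
  shows "root_nth 0 pi n < root_nth xi pi n \<and> root_nth xi pi n < root_nth 0 pi (n+1)"
proof -
  have "card (char_roots xi pi) = N - 2"
    using card_char_roots_eq[of xi pi] xi_bounds by auto
  with root_nth_interlace_xi[OF pi_gt_zero order_refl] assms show ?thesis by simp
qed

lemma root_order_alpha_0:
  assumes "0 < \<beta>0" "\<beta>0 < pi" "n + 2 \<le> N"
  shows "root_nth 0 \<beta>0 n < root_nth 0 pi n \<and> root_nth 0 pi n < root_nth 0 \<beta>0 (n+1)"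
proof -
  have "card (char_roots 0 pi) = N - 1"
    using card_char_roots_eq[of 0 pi] xi_bounds by auto
  with root_nth_interlace_beta[OF order_refl pi_gt_zero assms(1,2)] assms(3) show ?thesis by simp
qed

end

theorem corollary3p1:
  fixes N :: nat and f q w :: "nat \<Rightarrow> real"
  assumes N2: "N \<ge> 2"
    and f_nz: "\<And>n. n \<le> N \<Longrightarrow> f n \<noteq> 0"
    and w_pos: "\<And>n. 1 \<le> n \<Longrightarrow> n \<le> N \<Longrightarrow> w n > 0"
  defines "\<xi> \<equiv> sl_xi f"
    and "lam \<equiv> sl_eig N f q w"
  shows
  \<comment> \<open>(i)\<close>
  "(\<forall>\<alpha>0 \<beta>0. 0 < \<alpha>0 \<and> \<alpha>0 < \<xi> \<and> 0 < \<beta>0 \<and> \<beta>0 < pi \<longrightarrow>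
      (\<forall>n. n + 2 \<le> N \<longrightarrow>
          lam \<alpha>0 \<beta>0 n < lam 0 \<beta>0 n \<and> lam \<alpha>0 \<beta>0 n < lam \<alpha>0 pi n \<and>
          lam 0 \<beta>0 n < lam \<alpha>0 \<beta>0 (n+1) \<and> lam \<alpha>0 pi n < lam \<alpha>0 \<beta>0 (n+1)) \<and>
      lam \<alpha>0 \<beta>0 (N-1) < lam 0 \<beta>0 (N-1))
   \<and>
  \<comment> \<open>(ii)\<close>
   (\<forall>\<alpha>0 \<beta>0. \<xi> < \<alpha>0 \<and> \<alpha>0 < pi \<and> 0 < \<beta>0 \<and> \<beta>0 < pi \<longrightarrow>
      lam 0 \<beta>0 0 < lam \<alpha>0 \<beta>0 0 \<and>
      (\<forall>n. n + 2 \<le> N \<longrightarrow>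
          lam \<alpha>0 \<beta>0 n < lam 0 \<beta>0 (n+1) \<and> lam \<alpha>0 \<beta>0 n < lam \<alpha>0 pi n \<and>
          lam 0 \<beta>0 (n+1) < lam \<alpha>0 \<beta>0 (n+1) \<and> lam \<alpha>0 pi n < lam \<alpha>0 \<beta>0 (n+1)))
   \<and>
  \<comment> \<open>(iii)\<close>
   (\<forall>\<beta>0. 0 < \<beta>0 \<and> \<beta>0 < pi \<longrightarrow>
      lam 0 \<beta>0 0 < lam \<xi> \<beta>0 0 \<and>
      (\<forall>n. n + 3 \<le> N \<longrightarrow>
          lam \<xi> \<beta>0 n < lam 0 \<beta>0 (n+1) \<and> lam \<xi> \<beta>0 n < lam \<xi> pi n \<and>
          lam 0 \<beta>0 (n+1) < lam \<xi> \<beta>0 (n+1) \<and> lam \<xi> pi n < lam \<xi> \<beta>0 (n+1)) \<and>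
      lam \<xi> \<beta>0 (N-2) < lam 0 \<beta>0 (N-1))
   \<and>
  \<comment> \<open>(iv)\<close>
   (\<forall>\<alpha>0. 0 < \<alpha>0 \<and> \<alpha>0 < \<xi> \<longrightarrow>
      (\<forall>n. n + 2 \<le> N \<longrightarrow>
          lam \<alpha>0 pi n < lam 0 pi n \<and>
          (n + 3 \<le> N \<longrightarrow> lam 0 pi n < lam \<alpha>0 pi (n+1))))
   \<and>
  \<comment> \<open>(v)\<close>
   (\<forall>\<alpha>0. \<xi> < \<alpha>0 \<and> \<alpha>0 < pi \<longrightarrow>
      (\<forall>n. n + 2 \<le> N \<longrightarrow>
          lam 0 pi n < lam \<alpha>0 pi n \<and>
          (n + 3 \<le> N \<longrightarrow> lam \<alpha>0 pi n < lam 0 pi (n+1))))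
   \<and>
  \<comment> \<open>(vi)\<close>
   (\<forall>n. n + 3 \<le> N \<longrightarrow> lam 0 pi n < lam \<xi> pi n \<and> lam \<xi> pi n < lam 0 pi (n+1))
   \<and>
  \<comment> \<open>(vii)\<close>
   (\<forall>\<beta>0. 0 < \<beta>0 \<and> \<beta>0 < pi \<longrightarrow>
      (\<forall>n. n + 2 \<le> N \<longrightarrow> lam 0 \<beta>0 n < lam 0 pi n \<and> lam 0 pi n < lam 0 \<beta>0 (n+1)))"
proof -
  interpret sl_equation N f q w
    by unfold_locales (use N2 f_nz w_pos in auto)
  have lam: "lam \<alpha> \<beta> k = root_nth \<alpha> \<beta> k" for \<alpha> \<beta> k
    unfolding assms(5) by (rule sl_eig_eq_sorted_nth)
  show ?thesis
    unfolding lam assms(4)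
    by (intro conjI; (intro allI impI)?; (elim conjE)?;
        rule root_order_alpha_below_xi root_order_alpha_above_xi root_order_alpha_xi
          root_order_pi_alpha_below_xi root_order_pi_alpha_above_xi root_order_pi_xi
          root_order_alpha_0; assumption)
qed

end
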